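(* Let $N$ be a positive integer and $\boldsymbol{c}=(c_1,\dots,c_{2s})$ an index of even depth $2s\ge2$. Then \[ \sum_{\substack{A\subset[2s]^{>1}_{\boldsymbol{c}}\\ \{2r-1,2r\}\not\subset A\ (r\in[s])}}\frac{(-1)^{\#A}}{N^{\#A}}f_N(\boldsymbol{c}-\boldsymbol{\delta}_A)=\sum_{\substack{A\subset[2s]^1_{\boldsymbol{c}}\\ A\text{ odd-even}}}\frac{(-1)^{\#A/2}}{N^{\#A}}h_N(\boldsymbol{c}_{(-A)}). \]
   Context: $[n]=\{1,\dots,n\}$, $[n]_0=[n]\cup\{0\}$. An index is a tuple of positive integers; for $\boldsymbol{k}=(k_1,\dots,k_r)$ admissible (nonempty, last entry $\ge2$), $[r]^1_{\boldsymbol{k}}=\{i:k_i=1\}$, $S_{r,N}(A)=\{(n_i)\in[N-1]^r: n_i\le n_{i+1}\ (i\in A),\ n_i<n_{i+1}\ (i\in[r-1]\setminus A)\}$, $\zeta^\diamondsuit_N(\boldsymbol{k})=\sum_{A\subset[r]^1_{\boldsymbol{k}}}\sum_{S_{r,N}(A)}\prod_{i\in A}(N-n_i)^{-1}\prod_{i\notin A}n_i^{-k_i}$. For an even-depth index $\boldsymbol{d}=(d_1,\dots,d_{2t})$: $f_N(\boldsymbol{d})=\zeta^\diamondsuit_N(\{1\}^{d_1-1},d_2+1,\dots,\{1\}^{d_{2t-1}-1},d_{2t}+1)$. For $\boldsymbol{n}=(n_{i,j})_{i\in[2t],j\in[d_i]}$ and $A\subset[2t]$, $P_{N,\boldsymbol{d}}(\boldsymbol{n};A)=\prod_{i\in[2t]\setminus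 A,\,i\text{ odd}}\prod_{j\in[d_i]}(N-n_{i,j})^{-1}\cdot\prod_{i\in[2t]\setminus A,\,i\text{ even}}\prod_{j\in[d_i]}n_{i,j}^{-1}$, and \[ h_N(\boldsymbol{d})=\sum_{A\subset[2t]^1_{\boldsymbol{d}}}\frac1{N^{\#A}}\sum_{\substack{0\le n_{i,1}\le\cdots\le n_{i,d_i}<N\ (i\in[2t])\\ n_{i,d_i}<n_{i+1,1}\ (i\in[2t-1]_0,\ i+1\notin A)\\ n_{i,d_i}=n_{i+1,1}\ (i\in[2t-1]_0,\ i+1\in A)}}P_{N,\boldsymbol{d}}(\boldsymbol{n};A), \] where $n_{0,d_0}$ is read as $0$ and the $n_{i,j}$ are integers; $h_N(\varnothing)=1$. For an index $\boldsymbol{c}=(c_1,\dots,c_r)$: $[r]^1_{\boldsymbol{c}}=\{i:c_i=1\}$, $[r]^{>1}_{\boldsymbol{c}}=\{i:c_i>1\}$; $\boldsymbol{c}-\boldsymbol{\delta}_A=(c_1-\delta_{1\in A},\dots,c_r-\delta_{r\in A})$ with $\delta_{i\in A}=1$ if $i\in A$ else $0$; for $A\subset[r]$ with $[r]\setminus A=\{i_1<\dots<i_t\}$, $\boldsymbol{c}_{(-A)}=(c_{i_1},\dots,c_{i_t})$. $A\subset[2s]$ is odd-even if (odd $i\in A\Rightarrow i+1\in A$) and (even $i\in A\Rightarrow i-1\in A$). *)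

theory Defs
  imports Complex_Main
begin

text \<open>Indices are lists of positive naturals; the i-th entry (1-based) of k is k ! (i-1).\<close>

definition S_set :: "nat \<Rightarrow> nat \<Rightarrow> nat set \<Rightarrow> (nat \<Rightarrow> nat) set" where
  "S_set N r A = {n. (\<forall>i. (i \<in> {1..r} \<longrightarrow> 1 \<le> n i \<and> n i \<le> N - 1) \<and> (i \<notin> {1..r} \<longrightarrow> n i = 0))
      \<and> (\<forall>i\<in>{1..<r}. (i \<in> A \<longrightarrow> n i \<le> n (i+1)) \<and> (i \<notin> A \<longrightarrow> n i < n (i+1)))}"

definition zeta_diamond :: "nat \<Rightarrow> nat list \<Rightarrow> real" where
  "zeta_diamond N k =
     (\<Sum>A\<in>Pow {i\<in>{1..length k}. k ! (i-1) = 1}.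
        \<Sum>n\<in>S_set N (length k) A.
          (\<Prod>i\<in>A. 1 / (real N - real (n i))) *
          (\<Prod>i\<in>{1..length k} - A. 1 / real (n i) ^ (k ! (i-1))))"

definition fN :: "nat \<Rightarrow> nat list \<Rightarrow> real" where
  "fN N d = zeta_diamond N
     (concat (map (\<lambda>r. replicate (d ! (2*r) - 1) 1 @ [d ! (2*r+1) + 1]) [0..<length d div 2]))"

text \<open>Arrays n_{i,j} (i in [length d], j in [d_i]) are functions, zero outside the index range.\<close>
definition H_set :: "nat \<Rightarrow> nat list \<Rightarrow> nat set \<Rightarrow> (nat \<Rightarrow> nat \<Rightarrow> nat) set" where
  "H_set N d A = {n. (\<forall>i j. \<not> (i \<in> {1..length d} \<and> j \<in> {1..d ! (i-1)}) \<longrightarrow> n i j = 0)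
      \<and> (\<forall>i\<in>{1..length d}. (\<forall>j\<in>{1..<d ! (i-1)}. n i j \<le> n i (j+1))
                           \<and> (\<forall>j\<in>{1..d ! (i-1)}. n i j < N))
      \<and> (\<forall>i\<in>{0..<length d}.
            (let prev = (if i = 0 then 0 else n i (d ! (i-1))) in
              (i+1 \<notin> A \<longrightarrow> prev < n (i+1) 1) \<and> (i+1 \<in> A \<longrightarrow> prev = n (i+1) 1)))}"

definition P_N :: "nat \<Rightarrow> nat list \<Rightarrow> (nat \<Rightarrow> nat \<Rightarrow> nat) \<Rightarrow> nat set \<Rightarrow> real" where
  "P_N N d n A = (\<Prod>i\<in>{1..length d} - A. \<Prod>j\<in>{1..d ! (i-1)}.
      (if odd i then 1 / (real N - real (n i j)) else 1 / real (n i j)))"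

definition hN :: "nat \<Rightarrow> nat list \<Rightarrow> real" where
  "hN N d = (\<Sum>A\<in>Pow {i\<in>{1..length d}. d ! (i-1) = 1}.
      1 / real N ^ card A * (\<Sum>n\<in>H_set N d A. P_N N d n A))"

definition minus_delta :: "nat list \<Rightarrow> nat set \<Rightarrow> nat list" where
  "minus_delta c A = map (\<lambda>i. c ! i - (if i+1 \<in> A then 1 else 0)) [0..<length c]"

definition delete_pos :: "nat list \<Rightarrow> nat set \<Rightarrow> nat list" where
  "delete_pos c A = map (\<lambda>i. c ! i) (filter (\<lambda>i. i+1 \<notin> A) [0..<length c])"

definition odd_even :: "nat set \<Rightarrow> bool" where
  "odd_even A \<longleftrightarrow> (\<forall>i\<in>A. (odd i \<longrightarrow> i+1 \<in> A) \<and> (even i \<longrightarrow> i-1 \<in> A))"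

end

theory Submission
  imports Defs
begin

definition chain_set :: "(nat \<Rightarrow> 'a set) \<Rightarrow> (nat \<Rightarrow> 'a \<Rightarrow> 'a \<Rightarrow> bool) \<Rightarrow> 'a \<Rightarrow> nat \<Rightarrow> 'a \<Rightarrow> (nat \<Rightarrow> 'a) set" where
  "chain_set V R z r x = {f. (\<forall>i. (i \<in> {1..r} \<longrightarrow> f i \<in> V i) \<and> (i \<notin> {1..r} \<longrightarrow> f i = z))
      \<and> (\<forall>i\<in>{1..<r}. R i (f i) (f (i+1))) \<and> (0 < r \<longrightarrow> R 0 x (f 1))}"

definition chain_cons :: "'a \<Rightarrow> 'a \<Rightarrow> (nat \<Rightarrow> 'a) \<Rightarrow> nat \<Rightarrow> 'a" where
  "chain_cons z a f = (\<lambda>i. if i = 0 then z else if i = 1 then a else f (i - 1))"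

lemma chain_set_0 [simp]: "chain_set V R z 0 x = {\<lambda>_. z}"
  unfolding chain_set_def by auto

lemma finite_chain_set:
  assumes "\<forall>i\<in>{1..r}. finite (V i)"
  shows "finite (chain_set V R z r x)"
proof (rule finite_subset)
  show "chain_set V R z r x \<subseteq> {f. \<forall>i. (i \<in> {1..r} \<longrightarrow> f i \<in> (\<Union>j\<in>{1..r}. V j)) \<and> (i \<notin> {1..r} \<longrightarrow> f i = z)}"
    unfolding chain_set_def by auto
  show "finite \<dots>"
    by (rule finite_set_of_finite_funs) (use assms in auto)
qed

lemma sum_chain_set_Suc:
  assumes "\<forall>i\<in>{1..Suc r}. finite (V i)"
  shows "(\<Sum>f\<in>chain_set V R z (Suc r) x. F f) =
     (\<Sum>a\<in>{a\<in>V 1. R 0 x a}. \<Sum>f\<in>chain_set (\<lambda>i. V (Suc i)) (\<lambda>i. R (Suc i)) z r a. F (chain_cons z a f))"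
proof -
  let ?T = "SIGMA a:{a\<in>V 1. R 0 x a}. chain_set (\<lambda>i. V (Suc i)) (\<lambda>i. R (Suc i)) z r a"
  let ?tail = "\<lambda>f i. if i = 0 then z else f (Suc i)"
  have cons_tail: "chain_cons z (f 1) (?tail f) = f" if "f \<in> chain_set V R z (Suc r) x" for f
    using that by (auto simp: chain_set_def chain_cons_def fun_eq_iff)
  have "(\<Sum>f\<in>chain_set V R z (Suc r) x. F f) = (\<Sum>(a, f)\<in>?T. F (chain_cons z a f))"
  proof (rule sum.reindex_bij_witness[where i = "\<lambda>(a, f). chain_cons z a f" and j = "\<lambda>f. (f 1, ?tail f)"])
    fix f assume f: "f \<in> chain_set V R z (Suc r) x"
    show "(\<lambda>(a, f). chain_cons z a f) (f 1, ?tail f) = f" "(\<lambda>(a, f). F (chain_cons z a f)) (f 1, ?tail f) = F f"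
      using cons_tail[OF f] by simp_all
    show "(f 1, ?tail f) \<in> ?T"
      using f by (auto simp: chain_set_def)
  next
    fix p assume p: "p \<in> ?T"
    then obtain a g where [simp]: "p = (a, g)" by (cases p)
    from p show "(\<lambda>(a, f). chain_cons z a f) p \<in> chain_set V R z (Suc r) x"
      by (auto simp: chain_set_def chain_cons_def; case_tac i; auto)
    from p show "(\<lambda>f. (f 1, ?tail f)) ((\<lambda>(a, f). chain_cons z a f) p) = p"
      by (auto simp: chain_set_def chain_cons_def fun_eq_iff)
  qed
  also have "\<dots> = (\<Sum>a\<in>{a\<in>V 1. R 0 x a}. \<Sum>f\<in>chain_set (\<lambda>i. V (Suc i)) (\<lambda>i. R (Suc i)) z r a. F (chain_cons z a f))"
    by (rule sum.Sigma[symmetric]) (use assms in \<open>auto intro!: finite_chain_set\<close>)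
  finally show ?thesis .
qed

lemma chain_set_cong:
  assumes "\<And>i. i \<in> {1..r} \<Longrightarrow> V i = V' i" "\<And>i u v. i \<ge> 1 \<Longrightarrow> R i u v = R' i u v"
    "\<And>v. R 0 x v = R' 0 x' v"
  shows "chain_set V R z r x = chain_set V' R' z r x'"
  unfolding chain_set_def using assms by (auto simp: Ball_def)

lemma prod_chain_cons:
  "(\<Prod>i\<in>{1..Suc r}. w i (chain_cons z a f i)) = w 1 a * (\<Prod>i\<in>{1..r}. w (Suc i) (f i))"
proof -
  have "{1..Suc r} = insert 1 (Suc ` {1..r})" by (auto simp: image_iff)
  then have "(\<Prod>i\<in>{1..Suc r}. w i (chain_cons z a f i)) = w 1 a * (\<Prod>i\<in>Suc ` {1..r}. w i (chain_cons z a f i))"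
    by (simp add: chain_cons_def image_iff)
  also have "(\<Prod>i\<in>Suc ` {1..r}. w i (chain_cons z a f i)) = (\<Prod>i\<in>{1..r}. w (Suc i) (f i))"
    by (subst prod.reindex) (auto simp: chain_cons_def)
  finally show ?thesis .
qed

lemma chain_cons_Suc: "chain_cons z a f (Suc r) = (if r = 0 then a else f r)"
  by (simp add: chain_cons_def)

lemma prod_if_mem_subset:
  assumes "finite I" "A \<subseteq> I"
  shows "(\<Prod>i\<in>I. if i \<in> A then f i else g i) = (\<Prod>i\<in>A. f i) * (\<Prod>i\<in>I - A. g i)"
  using prod.If_cases[OF assms(1), of "\<lambda>i. i \<in> A" f g] assms(2)
  by (simp add: Int_absorb1 Diff_eq[symmetric])

lemma sum_subsets_split:
  fixes k n :: nat
  shows "(\<Sum>A\<in>{A. A \<subseteq> {i\<in>{1..k+n}. P i} \<and> Q A}. F A) =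
   (\<Sum>X\<in>{X. X \<subseteq> {i\<in>{1..k}. P i}}. \<Sum>C\<in>{C. C \<subseteq> {i\<in>{1..n}. P (k+i)} \<and> Q (X \<union> (+) k ` C)}. F (X \<union> (+) k ` C))"
proof -
  let ?S = "{A. A \<subseteq> {i\<in>{1..k+n}. P i} \<and> Q A}"
  let ?T = "SIGMA X:{X. X \<subseteq> {i\<in>{1..k}. P i}}. {C. C \<subseteq> {i\<in>{1..n}. P (k+i)} \<and> Q (X \<union> (+) k ` C)}"
  let ?glue = "\<lambda>(X, C). X \<union> (+) k ` C"
  let ?cut = "\<lambda>A. (A \<inter> {1..k}, {i. k + i \<in> A} - {0})"
  have glue_cut: "A \<inter> {1..k} \<union> (+) k ` ({i. k + i \<in> A} - {0}) = A" if "A \<subseteq> {1..k+n}" for A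
  proof (intro equalityI subsetI)
    fix x assume "x \<in> A"
    with that have "x \<le> k \<or> (x = k + (x - k) \<and> x - k \<in> {i. k + i \<in> A} - {0})" by auto
    with \<open>x \<in> A\<close> that show "x \<in> A \<inter> {1..k} \<union> (+) k ` ({i. k + i \<in> A} - {0})" by fastforce
  qed auto
  have "(\<Sum>A\<in>?S. F A) = (\<Sum>(X, C)\<in>?T. F (X \<union> (+) k ` C))"
  proof (rule sum.reindex_bij_witness[where i = ?glue and j = ?cut])
    fix A assume A: "A \<in> ?S"
    then have "A \<subseteq> {1..k+n}" by auto
    from glue_cut[OF this] show "?glue (?cut A) = A" by simp
    with A show "?cut A \<in> ?T" "(\<lambda>(X, C). F (X \<union> (+) k ` C)) (?cut A) = F A" by auto
  next
    fix p assume p: "p \<in> ?T"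
    then obtain X C where [simp]: "p = (X, C)" by (cases p)
    from p show "?cut (?glue p) = p" by auto
    from p show "?glue p \<in> ?S" by auto
  qed
  also have "\<dots> = (\<Sum>X\<in>{X. X \<subseteq> {i\<in>{1..k}. P i}}. \<Sum>C\<in>{C. C \<subseteq> {i\<in>{1..n}. P (k+i)} \<and> Q (X \<union> (+) k ` C)}. F (X \<union> (+) k ` C))"
    by (rule sum.Sigma[symmetric]) (auto intro: finite_subset[of _ "{1..n}"])
  finally show ?thesis .
qed

lemma sum_subsets_pair:
  "(\<Sum>X\<in>{X. X \<subseteq> {i\<in>{1..2::nat}. P i}}. G X)
     = G {} + (if P 1 then G {1} else 0) + (if P 2 then G {2} else 0) + (if P 1 \<and> P 2 then G {1, 2} else 0)"
proof -
  have set: "{i\<in>{1..2::nat}. P i} = (if P 1 then {1} else {}) \<union> (if P 2 then {2} else {})"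
    by (auto simp: le_Suc_eq numeral_2_eq_2)
  show ?thesis
    unfolding set by (cases "P 1"; cases "P 2") (simp_all add: Pow_def[symmetric] Pow_insert insert_commute add.assoc)
qed

lemma sum_subsets_Suc:
  "(\<Sum>A\<in>{A. A \<subseteq> {i\<in>{1..Suc n}. P i} \<and> Q A}. F A) =
   (\<Sum>B\<in>{B. B \<subseteq> {i\<in>{1..n}. P (Suc i)} \<and> Q (Suc ` B)}. F (Suc ` B)) +
   (if P 1 then (\<Sum>B\<in>{B. B \<subseteq> {i\<in>{1..n}. P (Suc i)} \<and> Q (insert 1 (Suc ` B))}. F (insert 1 (Suc ` B))) else 0)"
proof -
  have "{X. X \<subseteq> {i\<in>{1..1}. P i}} = (if P 1 then {{}, {1}} else {{}})"
    by (auto simp: subset_singleton_iff)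
  then show ?thesis
    using sum_subsets_split[where k = 1 and n = n and P = P and Q = Q and F = F] by (simp add: plus_1_eq_Suc)
qed

definition zeta_rel :: "nat set \<Rightarrow> nat \<Rightarrow> nat \<Rightarrow> nat \<Rightarrow> bool" where
  "zeta_rel A i a b = (if i = 0 \<or> i \<in> A then a \<le> b else a < b)"

definition zeta_weight :: "nat \<Rightarrow> nat list \<Rightarrow> nat set \<Rightarrow> nat \<Rightarrow> nat \<Rightarrow> real" where
  "zeta_weight N k A i v = (if i \<in> A then 1 / (real N - real v) else 1 / real v ^ (k ! (i - 1)))"

definition zeta_chain_sum :: "nat \<Rightarrow> nat list \<Rightarrow> nat set \<Rightarrow> nat \<Rightarrow> real" where
  "zeta_chain_sum N k A s =
     (\<Sum>n\<in>chain_set (\<lambda>_. {1..<N}) (zeta_rel A) 0 (length k) s. \<Prod>i\<in>{1..length k}. zeta_weight N k A i (n i))"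

definition zeta_from :: "nat \<Rightarrow> nat list \<Rightarrow> nat \<Rightarrow> real" where
  "zeta_from N k s = (\<Sum>A\<in>{A. A \<subseteq> {i\<in>{1..length k}. k ! (i - 1) = 1}}. zeta_chain_sum N k A s)"

lemma S_set_eq_chain_set: "S_set N r A = chain_set (\<lambda>_. {1..<N}) (zeta_rel A) 0 r 1"
  unfolding S_set_def chain_set_def zeta_rel_def
  by (rule Collect_cong) (fastforce simp: Suc_le_eq)

lemma zeta_diamond_eq_zeta_from: "zeta_diamond N k = zeta_from N k 1"
  unfolding zeta_diamond_def zeta_from_def zeta_chain_sum_def S_set_eq_chain_set Pow_def
proof (intro sum.cong refl)
  fix A n assume "A \<in> {A. A \<subseteq> {i \<in> {1..length k}. k ! (i - 1) = 1}}"
  then show "(\<Prod>i\<in>A. 1 / (real N - real (n i))) * (\<Prod>i\<in>{1..length k} - A. 1 / real (n i) ^ k ! (i - 1)) =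
      (\<Prod>i\<in>{1..length k}. zeta_weight N k A i (n i))"
    unfolding zeta_weight_def by (subst prod_if_mem_subset) auto
qed

lemma zeta_chain_sum_Cons:
  "zeta_chain_sum N (k # ks) A s = (\<Sum>a\<in>{max 1 s..<N}. zeta_weight N (k # ks) A 1 a *
      (\<Sum>f\<in>chain_set (\<lambda>_. {1..<N}) (\<lambda>i. zeta_rel A (Suc i)) 0 (length ks) a.
         \<Prod>i\<in>{1..length ks}. zeta_weight N (k # ks) A (Suc i) (f i)))"
proof -
  have "{a\<in>{1..<N}. zeta_rel A 0 s a} = {max 1 s..<N}"
    by (auto simp: zeta_rel_def)
  then show ?thesis
    unfolding zeta_chain_sum_def
    by (simp only: length_Cons sum_chain_set_Suc[OF finite_atLeastLessThan[THEN ballI]] prod_chain_cons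
        sum_distrib_left)
qed

lemma zeta_chain_sum_Cons_Suc:
  assumes "B \<subseteq> {1..length ks}"
  shows "zeta_chain_sum N (k # ks) (Suc ` B) s = (\<Sum>a\<in>{max 1 s..<N}. zeta_chain_sum N ks B (Suc a) / real a ^ k)"
proof -
  have "chain_set (\<lambda>_. {1..<N}) (\<lambda>i. zeta_rel (Suc ` B) (Suc i)) 0 (length ks) a
      = chain_set (\<lambda>_. {1..<N}) (zeta_rel B) 0 (length ks) (Suc a)" for a
    by (rule chain_set_cong) (use assms in \<open>auto simp: zeta_rel_def inj_image_mem_iff\<close>)
  moreover have "zeta_weight N (k # ks) (Suc ` B) (Suc i) v = zeta_weight N ks B i v" if "i \<ge> 1" for i v
    using that by (simp add: zeta_weight_def inj_image_mem_iff)
  moreover have "zeta_weight N (k # ks) (Suc ` B) 1 a = 1 / real a ^ k" for a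
    using assms by (auto simp: zeta_weight_def)
  ultimately show ?thesis
    unfolding zeta_chain_sum_Cons by (simp add: zeta_chain_sum_def sum_divide_distrib)
qed

lemma zeta_chain_sum_Cons_insert:
  assumes "B \<subseteq> {1..length ks}"
  shows "zeta_chain_sum N (k # ks) (insert 1 (Suc ` B)) s
    = (\<Sum>a\<in>{max 1 s..<N}. zeta_chain_sum N ks B a / (real N - real a))"
proof -
  have "chain_set (\<lambda>_. {1..<N}) (\<lambda>i. zeta_rel (insert 1 (Suc ` B)) (Suc i)) 0 (length ks) a
      = chain_set (\<lambda>_. {1..<N}) (zeta_rel B) 0 (length ks) a" for a
    by (rule chain_set_cong) (use assms in \<open>auto simp: zeta_rel_def inj_image_mem_iff\<close>)
  moreover have "zeta_weight N (k # ks) (insert 1 (Suc ` B)) (Suc i) v = zeta_weight N ks B i v" if "i \<ge> 1" for i v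
    using that by (simp add: zeta_weight_def inj_image_mem_iff)
  moreover have "zeta_weight N (k # ks) (insert 1 (Suc ` B)) 1 a = 1 / (real N - real a)" for a
    by (simp add: zeta_weight_def)
  ultimately show ?thesis
    unfolding zeta_chain_sum_Cons by (simp add: zeta_chain_sum_def sum_divide_distrib)
qed

lemma zeta_from_Cons:
  "zeta_from N (k # ks) s = (\<Sum>m\<in>{max 1 s..<N}. zeta_from N ks (Suc m) / real m ^ k
      + (if k = 1 then zeta_from N ks m / (real N - real m) else 0))"
proof -
  let ?I = "{i\<in>{1..length ks}. ks ! (i - 1) = 1}"
  have I: "{i\<in>{1..length ks}. (k # ks) ! (Suc i - 1) = 1} = ?I"
    by (auto simp: nth_Cons')
  have "zeta_from N (k # ks) s = (\<Sum>B\<in>{B. B \<subseteq> ?I}. zeta_chain_sum N (k # ks) (Suc ` B) s)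
      + (if k = 1 then (\<Sum>B\<in>{B. B \<subseteq> ?I}. zeta_chain_sum N (k # ks) (insert 1 (Suc ` B)) s) else 0)"
    using sum_subsets_Suc[where n = "length ks" and P = "\<lambda>i. (k # ks) ! (i - 1) = 1" and Q = "\<lambda>_. True"
        and F = "\<lambda>A. zeta_chain_sum N (k # ks) A s"]
    unfolding zeta_from_def I by simp
  also have "(\<Sum>B\<in>{B. B \<subseteq> ?I}. zeta_chain_sum N (k # ks) (Suc ` B) s)
      = (\<Sum>B\<in>{B. B \<subseteq> ?I}. \<Sum>m\<in>{max 1 s..<N}. zeta_chain_sum N ks B (Suc m) / real m ^ k)"
    by (intro sum.cong refl zeta_chain_sum_Cons_Suc) auto
  also have "\<dots> = (\<Sum>m\<in>{max 1 s..<N}. zeta_from N ks (Suc m) / real m ^ k)"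
    unfolding zeta_from_def by (subst sum.swap) (simp add: sum_divide_distrib)
  also have "(\<Sum>B\<in>{B. B \<subseteq> ?I}. zeta_chain_sum N (k # ks) (insert 1 (Suc ` B)) s)
      = (\<Sum>B\<in>{B. B \<subseteq> ?I}. \<Sum>m\<in>{max 1 s..<N}. zeta_chain_sum N ks B m / (real N - real m))"
    by (intro sum.cong refl zeta_chain_sum_Cons_insert) auto
  also have "\<dots> = (\<Sum>m\<in>{max 1 s..<N}. zeta_from N ks m / (real N - real m))"
    unfolding zeta_from_def by (subst sum.swap) (simp add: sum_divide_distrib)
  finally show ?thesis
    by (simp add: sum.distrib)
qed

text \<open>The nested-sum operator of an index: the operator of depth one is summation over
  \<open>s \<le> m < N\<close> weighted by \<open>1/m^k\<close> (strict step to the next variable) plus, for \<open>k = 1\<close>,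
  by \<open>1/(N-m)\<close> (weak step), which is exactly the expansion of \<open>\<zeta>\<^sup>\<diamondsuit>\<close>.\<close>
fun zeta_op :: "nat \<Rightarrow> nat list \<Rightarrow> (nat \<Rightarrow> real) \<Rightarrow> nat \<Rightarrow> real" where
  "zeta_op N [] \<phi> s = \<phi> s"
| "zeta_op N (k # ks) \<phi> s = (\<Sum>m\<in>{max 1 s..<N}. zeta_op N ks \<phi> (Suc m) / real m ^ k
      + (if k = 1 then zeta_op N ks \<phi> m / (real N - real m) else 0))"

lemma zeta_from_eq_zeta_op: "zeta_from N k s = zeta_op N k (\<lambda>_. 1) s"
proof (induction k arbitrary: s)
  case Nil
  have "{A. A \<subseteq> {i \<in> {1..length ([] :: nat list)}. [] ! (i - 1) = (1 :: nat)}} = {{}}"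
    by auto
  then show ?case
    by (simp add: zeta_from_def zeta_chain_sum_def)
next
  case (Cons k ks)
  then show ?case
    by (simp only: zeta_from_Cons zeta_op.simps)
qed

lemma zeta_op_append: "zeta_op N (xs @ ys) \<phi> = zeta_op N xs (zeta_op N ys \<phi>)"
  by (induction xs) (simp_all only: append_Cons append_Nil zeta_op.simps)

lemma zeta_diamond_eq_zeta_op: "zeta_diamond N k = zeta_op N k (\<lambda>_. 1) 1"
  by (simp add: zeta_diamond_eq_zeta_from zeta_from_eq_zeta_op)

definition h_rows :: "nat \<Rightarrow> nat list \<Rightarrow> nat \<Rightarrow> (nat \<Rightarrow> nat) set" where
  "h_rows N d i = {\<rho>. (\<forall>j. j \<notin> {1..d ! (i - 1)} \<longrightarrow> \<rho> j = 0)
      \<and> (\<forall>j\<in>{1..<d ! (i - 1)}. \<rho> j \<le> \<rho> (j + 1)) \<and> (\<forall>j\<in>{1..d ! (i - 1)}. \<rho> j < N)}"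

definition h_rel :: "nat list \<Rightarrow> nat set \<Rightarrow> nat \<Rightarrow> (nat \<Rightarrow> nat) \<Rightarrow> (nat \<Rightarrow> nat) \<Rightarrow> bool" where
  "h_rel d A i \<rho> \<rho>' = (let prev = \<rho> (if i = 0 then 0 else d ! (i - 1)) in
      (Suc i \<notin> A \<longrightarrow> prev < \<rho>' 1) \<and> (Suc i \<in> A \<longrightarrow> prev = \<rho>' 1))"

definition weight :: "nat \<Rightarrow> bool \<Rightarrow> nat \<Rightarrow> real" where
  "weight N p v = (if p then 1 / (real N - real v) else 1 / real v)"

definition h_weight :: "nat \<Rightarrow> nat list \<Rightarrow> bool \<Rightarrow> nat set \<Rightarrow> nat \<Rightarrow> (nat \<Rightarrow> nat) \<Rightarrow> real" where
  "h_weight N d p A i \<rho> = (if i \<in> A then 1 else \<Prod>j\<in>{1..d ! (i - 1)}. weight N (odd i = p) (\<rho> j))"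

definition h_chain_sum :: "nat \<Rightarrow> nat list \<Rightarrow> bool \<Rightarrow> nat set \<Rightarrow> nat \<Rightarrow> real" where
  "h_chain_sum N d p A y = (\<Sum>n\<in>chain_set (h_rows N d) (h_rel d A) (\<lambda>_. 0) (length d) (\<lambda>_. y).
      \<Prod>i\<in>{1..length d}. h_weight N d p A i (n i))"

definition h_from :: "nat \<Rightarrow> nat list \<Rightarrow> bool \<Rightarrow> nat \<Rightarrow> real" where
  "h_from N d p y = (\<Sum>A\<in>{A. A \<subseteq> {i\<in>{1..length d}. d ! (i - 1) = 1}}. 1 / real N ^ card A * h_chain_sum N d p A y)"

lemma finite_h_rows: "finite (h_rows N d i)"
proof (rule finite_subset)
  show "h_rows N d i \<subseteq> {\<rho>. \<forall>j. (j \<in> {1..d ! (i - 1)} \<longrightarrow> \<rho> j \<in> {..<N}) \<and> (j \<notin> {1..d ! (i - 1)} \<longrightarrow> \<rho> j = 0)}"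
    unfolding h_rows_def by auto
  show "finite \<dots>"
    by (rule finite_set_of_finite_funs) auto
qed

lemma H_set_eq_chain_set: "H_set N d A = chain_set (h_rows N d) (h_rel d A) (\<lambda>_. 0) (length d) (\<lambda>_. 0)"
proof -
  let ?r = "length d"
  have rows: "(\<forall>i j. \<not> (i \<in> {1..?r} \<and> j \<in> {1..d ! (i - 1)}) \<longrightarrow> n i j = 0)
      \<and> (\<forall>i\<in>{1..?r}. (\<forall>j\<in>{1..<d ! (i - 1)}. n i j \<le> n i (j + 1)) \<and> (\<forall>j\<in>{1..d ! (i - 1)}. n i j < N))
    \<longleftrightarrow> (\<forall>i. (i \<in> {1..?r} \<longrightarrow> n i \<in> h_rows N d i) \<and> (i \<notin> {1..?r} \<longrightarrow> n i = (\<lambda>_. 0)))" for n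
    unfolding h_rows_def by (auto simp: fun_eq_iff)
  have "{0..<?r} = (if ?r = 0 then {} else insert 0 {1..<?r})"
    by auto
  then have links: "(\<forall>i\<in>{0..<?r}. let prev = if i = 0 then 0 else n i (d ! (i - 1)) in
        (i + 1 \<notin> A \<longrightarrow> prev < n (i + 1) 1) \<and> (i + 1 \<in> A \<longrightarrow> prev = n (i + 1) 1))
    \<longleftrightarrow> (\<forall>i\<in>{1..<?r}. h_rel d A i (n i) (n (i + 1))) \<and> (0 < ?r \<longrightarrow> h_rel d A 0 (\<lambda>_. 0) (n 1))" for n
    unfolding h_rel_def Let_def by auto
  show ?thesis
    unfolding H_set_def chain_set_def
    apply (rule Collect_cong)
    subgoal for n using rows[of n] links[of n] by argo
    done
qed

lemma hN_eq_h_from: "hN N d = h_from N d True 0"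
  unfolding hN_def h_from_def h_chain_sum_def H_set_eq_chain_set Pow_def
proof (intro sum.cong refl arg_cong[where f = "\<lambda>x. _ * x"])
  fix A n assume "A \<in> {A. A \<subseteq> {i\<in>{1..length d}. d ! (i - 1) = 1}}"
  then show "P_N N d n A = (\<Prod>i\<in>{1..length d}. h_weight N d True A i (n i))"
    unfolding P_N_def h_weight_def weight_def
    by (subst prod_if_mem_subset) (auto intro!: prod.cong)
qed

lemma h_chain_sum_Cons:
  assumes "B \<subseteq> {1..length ds}" "X \<subseteq> {1}"
  shows "h_chain_sum N (e # ds) p (X \<union> Suc ` B) y =
    (\<Sum>\<rho>\<in>{\<rho>\<in>h_rows N (e # ds) 1. h_rel (e # ds) X 0 (\<lambda>_. y) \<rho>}.
       h_weight N (e # ds) p X 1 \<rho> * h_chain_sum N ds (\<not> p) B (\<rho> e))"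
proof -
  let ?A = "X \<union> Suc ` B"
  have start: "h_rel (e # ds) ?A 0 = h_rel (e # ds) X 0"
    using assms by (auto simp: h_rel_def Let_def fun_eq_iff)
  have first: "h_weight N (e # ds) p ?A 1 = h_weight N (e # ds) p X 1"
    using assms by (auto simp: h_weight_def fun_eq_iff)
  have tail: "chain_set (\<lambda>i. h_rows N (e # ds) (Suc i)) (\<lambda>i. h_rel (e # ds) ?A (Suc i)) (\<lambda>_. 0) (length ds) \<rho>
      = chain_set (h_rows N ds) (h_rel ds B) (\<lambda>_. 0) (length ds) (\<lambda>_. \<rho> e)" for \<rho>
  proof (rule chain_set_cong)
    fix i :: nat assume "i \<in> {1..length ds}"
    then show "h_rows N (e # ds) (Suc i) = h_rows N ds i"
      unfolding h_rows_def by (cases i) auto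
  next
    fix i :: nat and u v assume "1 \<le> i"
    then show "h_rel (e # ds) ?A (Suc i) u v = h_rel ds B i u v"
      using assms unfolding h_rel_def Let_def by (cases i) (auto simp: inj_image_mem_iff)
  qed (use assms in \<open>auto simp: h_rel_def Let_def inj_image_mem_iff\<close>)
  have weights: "h_weight N (e # ds) p ?A (Suc i) v = h_weight N ds (\<not> p) B i v" if "i \<ge> 1" for i v
    using that assms by (auto simp: h_weight_def inj_image_mem_iff nth_Cons')
  show ?thesis
    unfolding h_chain_sum_def length_Cons
    by (simp only: sum_chain_set_Suc[OF finite_h_rows[THEN ballI]] prod_chain_cons start first tail)
      (simp add: weights sum_distrib_left)
qed

lemma h_from_Cons:
  "h_from N (e # ds) p y =
     (\<Sum>\<rho>\<in>{\<rho>\<in>h_rows N (e # ds) 1. y < \<rho> 1}. (\<Prod>j\<in>{1..e}. weight N p (\<rho> j)) * h_from N ds (\<not> p) (\<rho> e))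
     + (if e = 1 \<and> y < N then h_from N ds (\<not> p) y / real N else 0)"
proof -
  let ?I = "{i\<in>{1..length ds}. ds ! (i - 1) = 1}"
  let ?R = "{\<rho>\<in>h_rows N (e # ds) 1. y < \<rho> 1}"
  have I: "{i\<in>{1..length ds}. (e # ds) ! (Suc i - 1) = 1} = ?I"
    by (auto simp: nth_Cons')
  have B: "B \<subseteq> {1..length ds}" "finite B" "0 \<notin> B" if "B \<in> {B. B \<subseteq> ?I}" for B
    using that by (auto intro: finite_subset)
  have "h_from N (e # ds) p y =
      (\<Sum>B\<in>{B. B \<subseteq> ?I}. 1 / real N ^ card (Suc ` B) * h_chain_sum N (e # ds) p (Suc ` B) y)
      + (if e = 1 then (\<Sum>B\<in>{B. B \<subseteq> ?I}. 1 / real N ^ card (insert 1 (Suc ` B))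
            * h_chain_sum N (e # ds) p (insert 1 (Suc ` B)) y) else 0)"
    using sum_subsets_Suc[where n = "length ds" and P = "\<lambda>i. (e # ds) ! (i - 1) = 1" and Q = "\<lambda>_. True"
        and F = "\<lambda>A. 1 / real N ^ card A * h_chain_sum N (e # ds) p A y"]
    unfolding h_from_def I by simp
  also have "(\<Sum>B\<in>{B. B \<subseteq> ?I}. 1 / real N ^ card (Suc ` B) * h_chain_sum N (e # ds) p (Suc ` B) y)
      = (\<Sum>B\<in>{B. B \<subseteq> ?I}. \<Sum>\<rho>\<in>?R. (\<Prod>j\<in>{1..e}. weight N p (\<rho> j))
            * (1 / real N ^ card B * h_chain_sum N ds (\<not> p) B (\<rho> e)))"
  proof (intro sum.cong refl)
    fix B assume "B \<in> {B. B \<subseteq> ?I}"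
    from h_chain_sum_Cons[OF B(1)[OF this], of "{}"] show "1 / real N ^ card (Suc ` B) * h_chain_sum N (e # ds) p (Suc ` B) y
      = (\<Sum>\<rho>\<in>?R. (\<Prod>j\<in>{1..e}. weight N p (\<rho> j)) * (1 / real N ^ card B * h_chain_sum N ds (\<not> p) B (\<rho> e)))"
      by (simp add: h_rel_def h_weight_def card_image sum_distrib_left ac_simps)
  qed
  also have "\<dots> = (\<Sum>\<rho>\<in>?R. (\<Prod>j\<in>{1..e}. weight N p (\<rho> j)) * h_from N ds (\<not> p) (\<rho> e))"
    unfolding h_from_def by (subst sum.swap) (simp add: sum_distrib_left)
  also have "(if e = 1 then (\<Sum>B\<in>{B. B \<subseteq> ?I}. 1 / real N ^ card (insert 1 (Suc ` B))
            * h_chain_sum N (e # ds) p (insert 1 (Suc ` B)) y) else 0)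
      = (if e = 1 \<and> y < N then h_from N ds (\<not> p) y / real N else 0)"
  proof (cases "e = 1")
    case True
    have first_row: "{\<rho>\<in>h_rows N (1 # ds) 1. h_rel (1 # ds) {1} 0 (\<lambda>_. y) \<rho>}
        = (if y < N then {\<lambda>j. if j = 1 then y else 0} else {})"
    proof (intro set_eqI iffI)
      fix \<rho> assume "\<rho> \<in> {\<rho>\<in>h_rows N (1 # ds) 1. h_rel (1 # ds) {1} 0 (\<lambda>_. y) \<rho>}"
      then have "\<rho> 1 = y" "y < N" "\<forall>j. j \<noteq> 1 \<longrightarrow> \<rho> j = 0"
        by (auto simp: h_rows_def h_rel_def)
      then show "\<rho> \<in> (if y < N then {\<lambda>j. if j = 1 then y else 0} else {})"
        by (auto simp: fun_eq_iff)
    next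
      fix \<rho> :: "nat \<Rightarrow> nat" assume "\<rho> \<in> (if y < N then {\<lambda>j. if j = 1 then y else 0} else {})"
      then show "\<rho> \<in> {\<rho>\<in>h_rows N (1 # ds) 1. h_rel (1 # ds) {1} 0 (\<lambda>_. y) \<rho>}"
        by (auto simp: h_rows_def h_rel_def split: if_splits)
    qed
    have "1 / real N ^ card (insert 1 (Suc ` B)) * h_chain_sum N (e # ds) p (insert 1 (Suc ` B)) y
        = (if y < N then 1 / real N ^ card B * h_chain_sum N ds (\<not> p) B y / real N else 0)"
      if "B \<in> {B. B \<subseteq> ?I}" for B
    proof -
      have "card (insert 1 (Suc ` B)) = Suc (card B)"
        using B[OF that] by (subst card_insert_disjoint) (auto simp: card_image)
      moreover have "h_chain_sum N (1 # ds) p (insert 1 (Suc ` B)) y = (\<Sum>\<rho>\<in>(if y < N then {\<lambda>j. if j = 1 then y else 0} else {}).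
          h_weight N (1 # ds) p {1} 1 \<rho> * h_chain_sum N ds (\<not> p) B (\<rho> 1))"
        using h_chain_sum_Cons[OF B(1)[OF that], of "{1}" N 1 p y] unfolding first_row by simp
      ultimately show ?thesis
        using True by (simp add: h_weight_def)
    qed
    then have "(\<Sum>B\<in>{B. B \<subseteq> ?I}. 1 / real N ^ card (insert 1 (Suc ` B))
          * h_chain_sum N (e # ds) p (insert 1 (Suc ` B)) y)
        = (\<Sum>B\<in>{B. B \<subseteq> ?I}. if y < N then 1 / real N ^ card B * h_chain_sum N ds (\<not> p) B y / real N else 0)"
      by (rule sum.cong[OF refl])
    also have "\<dots> = (if y < N then h_from N ds (\<not> p) y / real N else 0)"
      by (simp add: h_from_def sum_divide_distrib)
    finally show ?thesis
      using True by simp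
  qed simp
  finally show ?thesis .
qed

definition tail_sum :: "nat \<Rightarrow> bool \<Rightarrow> (nat \<Rightarrow> real) \<Rightarrow> nat \<Rightarrow> real" where
  "tail_sum N p g y = (\<Sum>m\<in>{max 1 y..<N}. weight N p m * g m)"

definition strict_tail_sum :: "nat \<Rightarrow> bool \<Rightarrow> (nat \<Rightarrow> real) \<Rightarrow> nat \<Rightarrow> real" where
  "strict_tail_sum N p g y = (\<Sum>m\<in>{Suc y..<N}. weight N p m * g m)"

lemma sum_weakly_increasing_row:
  assumes "a \<ge> 1"
  shows "(\<Sum>\<rho>\<in>chain_set (\<lambda>_. {..<N}) (\<lambda>_. (\<le>)) 0 j a. (\<Prod>i\<in>{1..j}. weight N p (\<rho> i)) * G (if j = 0 then a else \<rho> j))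
    = (tail_sum N p ^^ j) G a"
  using assms
proof (induction j arbitrary: a)
  case 0
  then show ?case by simp
next
  case (Suc j)
  have "{b\<in>{..<N}. a \<le> b} = {max 1 a..<N}"
    using Suc.prems by auto
  then have "(\<Sum>\<rho>\<in>chain_set (\<lambda>_. {..<N}) (\<lambda>_. (\<le>)) 0 (Suc j) a. (\<Prod>i\<in>{1..Suc j}. weight N p (\<rho> i)) * G (\<rho> (Suc j)))
      = (\<Sum>b\<in>{max 1 a..<N}. \<Sum>\<rho>\<in>chain_set (\<lambda>_. {..<N}) (\<lambda>_. (\<le>)) 0 j b.
           weight N p b * ((\<Prod>i\<in>{1..j}. weight N p (\<rho> i)) * G (if j = 0 then b else \<rho> j)))"
    by (simp only: sum_chain_set_Suc[OF finite_lessThan[THEN ballI]] prod_chain_cons[where w = "\<lambda>_. weight N p"]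
        chain_cons_Suc mult.assoc)
  also have "\<dots> = (\<Sum>b\<in>{max 1 a..<N}. weight N p b * (tail_sum N p ^^ j) G b)"
  proof (intro sum.cong refl)
    fix b assume "b \<in> {max 1 a..<N}"
    then have "b \<ge> 1" by simp
    then show "(\<Sum>\<rho>\<in>chain_set (\<lambda>_. {..<N}) (\<lambda>_. (\<le>)) 0 j b. weight N p b * ((\<Prod>i\<in>{1..j}. weight N p (\<rho> i))
        * G (if j = 0 then b else \<rho> j))) = weight N p b * (tail_sum N p ^^ j) G b"
      by (simp only: sum_distrib_left[symmetric] Suc.IH)
  qed
  also have "\<dots> = (tail_sum N p ^^ Suc j) G a"
    by (simp add: tail_sum_def)
  finally show ?case
    by simp
qed

lemma sum_h_first_row:
  assumes "e \<ge> 1"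
  shows "(\<Sum>\<rho>\<in>{\<rho>\<in>h_rows N (e # ds) 1. y < \<rho> 1}. (\<Prod>j\<in>{1..e}. weight N p (\<rho> j)) * G (\<rho> e))
    = strict_tail_sum N p ((tail_sum N p ^^ (e - 1)) G) y"
proof -
  obtain j where e: "e = Suc j"
    using assms by (cases e) auto
  have row: "{\<rho>\<in>h_rows N (e # ds) 1. y < \<rho> 1} = chain_set (\<lambda>_. {..<N}) (\<lambda>i. if i = 0 then (<) else (\<le>)) 0 e y"
    using assms unfolding h_rows_def chain_set_def by (intro Collect_cong) auto
  have tail: "chain_set (\<lambda>_. {..<N}) (\<lambda>i. if Suc i = 0 then (<) else (\<le>)) 0 j b
      = chain_set (\<lambda>_. {..<N}) (\<lambda>_. (\<le>)) 0 j b" for b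
    by (rule chain_set_cong) auto
  have range: "{b\<in>{..<N}. y < b} = {Suc y..<N}"
    by auto
  have "(\<Sum>\<rho>\<in>{\<rho>\<in>h_rows N (e # ds) 1. y < \<rho> 1}. (\<Prod>j\<in>{1..e}. weight N p (\<rho> j)) * G (\<rho> e))
      = (\<Sum>b\<in>{Suc y..<N}. \<Sum>\<rho>\<in>chain_set (\<lambda>_. {..<N}) (\<lambda>_. (\<le>)) 0 j b.
           weight N p b * ((\<Prod>i\<in>{1..j}. weight N p (\<rho> i)) * G (if j = 0 then b else \<rho> j)))"
    unfolding row unfolding e
    by (simp only: sum_chain_set_Suc[OF finite_lessThan[THEN ballI]] prod_chain_cons[where w = "\<lambda>_. weight N p"]
        chain_cons_Suc mult.assoc tail simp_thms(6) if_True range)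
  also have "\<dots> = (\<Sum>b\<in>{Suc y..<N}. weight N p b * (tail_sum N p ^^ j) G b)"
  proof (intro sum.cong refl)
    fix b assume "b \<in> {Suc y..<N}"
    then have "b \<ge> 1" by simp
    then show "(\<Sum>\<rho>\<in>chain_set (\<lambda>_. {..<N}) (\<lambda>_. (\<le>)) 0 j b. weight N p b * ((\<Prod>i\<in>{1..j}. weight N p (\<rho> i))
        * G (if j = 0 then b else \<rho> j))) = weight N p b * (tail_sum N p ^^ j) G b"
      by (simp only: sum_distrib_left[symmetric] sum_weakly_increasing_row)
  qed
  finally show ?thesis
    by (simp add: strict_tail_sum_def e)
qed

text \<open>The nested-sum operator of \<open>h\<^sub>N\<close>: each row contributes a chain strictly above the
  previous row and weakly increasing within the row, weighted by \<open>1/(N-n)\<close> on rows of the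
  parity \<open>p\<close> and by \<open>1/n\<close> on the others; a row of length one may instead repeat the previous
  value at the cost \<open>1/N\<close>.\<close>
fun h_op :: "nat \<Rightarrow> nat list \<Rightarrow> bool \<Rightarrow> (nat \<Rightarrow> real) \<Rightarrow> nat \<Rightarrow> real" where
  "h_op N [] p \<phi> y = \<phi> y"
| "h_op N (e # ds) p \<phi> y = strict_tail_sum N p ((tail_sum N p ^^ (e - 1)) (h_op N ds (\<not> p) \<phi>)) y
     + (if e = 1 then h_op N ds (\<not> p) \<phi> y / real N else 0)"

lemma funpow_tail_sum_cong:
  assumes "\<And>t. t < N \<Longrightarrow> g t = g' t" "t < N"
  shows "(tail_sum N p ^^ j) g t = (tail_sum N p ^^ j) g' t"
  using assms(2) by (induction j arbitrary: t) (simp_all add: assms(1) tail_sum_def)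

lemma h_from_eq_h_op:
  assumes "\<forall>x\<in>set d. x \<ge> 1" "y < N"
  shows "h_from N d p y = h_op N d p (\<lambda>_. 1) y"
  using assms
proof (induction d arbitrary: p y)
  case Nil
  have "{A. A \<subseteq> {i \<in> {1..length ([] :: nat list)}. [] ! (i - 1) = (1 :: nat)}} = {{}}"
    by auto
  then show ?case
    by (simp add: h_from_def h_chain_sum_def)
next
  case (Cons e ds)
  then have e: "e \<ge> 1" by simp
  from Cons have IH: "h_from N ds (\<not> p) t = h_op N ds (\<not> p) (\<lambda>_. 1) t" if "t < N" for t
    using that by simp
  have "h_from N (e # ds) p y = strict_tail_sum N p ((tail_sum N p ^^ (e - 1)) (h_from N ds (\<not> p))) y
     + (if e = 1 then h_from N ds (\<not> p) y / real N else 0)"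
    unfolding h_from_Cons sum_h_first_row[OF e] using Cons.prems by simp
  also have "\<dots> = h_op N (e # ds) p (\<lambda>_. 1) y"
    using Cons.prems by (auto simp: IH strict_tail_sum_def intro!: sum.cong funpow_tail_sum_cong)
  finally show ?case .
qed

lemma hN_eq_h_op:
  assumes "\<forall>x\<in>set d. x \<ge> 1" "N \<ge> 1"
  shows "hN N d = h_op N d True (\<lambda>_. 1) 0"
  using assms by (simp add: hN_eq_h_from h_from_eq_h_op)

lemma h_op_append: "h_op N (xs @ ys) p \<phi> = h_op N xs p (h_op N ys (if even (length xs) then p else \<not> p) \<phi>)"
proof (induction xs arbitrary: p)
  case Nil
  then show ?case by (simp add: fun_eq_iff)
next
  case (Cons e xs)
  have "h_op N ys (if even (length xs) then \<not> p else \<not> \<not> p) \<phi> = h_op N ys (if even (length (e # xs)) then p else \<not> p) \<phi>"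
    by simp
  then show ?case
    using Cons.IH[of "\<not> p"] by (simp only: append_Cons h_op.simps)
qed

lemma tail_sum_lin: "tail_sum N p (\<lambda>t. f t + c * g t) y = tail_sum N p f y + c * tail_sum N p g y"
  by (simp add: tail_sum_def algebra_simps sum.distrib sum_distrib_left)

lemma strict_tail_sum_lin: "strict_tail_sum N p (\<lambda>t. f t + c * g t) y = strict_tail_sum N p f y + c * strict_tail_sum N p g y"
  by (simp add: strict_tail_sum_def algebra_simps sum.distrib sum_distrib_left)

lemma strict_tail_sum_add: "strict_tail_sum N p (\<lambda>t. f t + g t) y = strict_tail_sum N p f y + strict_tail_sum N p g y"
  using strict_tail_sum_lin[where c = 1] by simp

lemma funpow_tail_sum_Suc: "(tail_sum N p ^^ Suc j) g y = (\<Sum>m\<in>{max 1 y..<N}. weight N p m * (tail_sum N p ^^ j) g m)"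
  by (simp add: tail_sum_def)

lemma funpow_tail_sum_sum:
  "(tail_sum N p ^^ j) (\<lambda>t. \<Sum>A\<in>S. c A * f A t) y = (\<Sum>A\<in>S. c A * (tail_sum N p ^^ j) (f A) y)"
proof (induction j arbitrary: y)
  case (Suc j)
  show ?case
    by (simp only: funpow_tail_sum_Suc Suc.IH sum_distrib_left) (subst sum.swap, simp add: ac_simps)
qed simp

lemma funpow_tail_sum_lin:
  "(tail_sum N p ^^ j) (\<lambda>t. f t + c * g t) y = (tail_sum N p ^^ j) f y + c * (tail_sum N p ^^ j) g y"
  using funpow_tail_sum_sum[where S = "{True, False}" and c = "\<lambda>A. if A then 1 else c" and f = "\<lambda>A. if A then f else g"]
  by simp

lemma strict_tail_sum_cong: "(\<And>t. t < N \<Longrightarrow> f t = g t) \<Longrightarrow> strict_tail_sum N p f y = strict_tail_sum N p g y"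
  by (simp add: strict_tail_sum_def)

lemma tail_sum_cong: "(\<And>t. t < N \<Longrightarrow> f t = g t) \<Longrightarrow> tail_sum N p f y = tail_sum N p g y"
  by (simp add: tail_sum_def)

lemma zeta_op_sum: "zeta_op N ks (\<lambda>t. \<Sum>A\<in>S. c A * f A t) s = (\<Sum>A\<in>S. c A * zeta_op N ks (f A) s)"
proof (induction ks arbitrary: s)
  case (Cons k ks)
  show ?case
    by (cases "k = 1")
      (simp_all add: Cons.IH sum_distrib_left sum_divide_distrib sum.distrib[symmetric] sum.swap[of _ S] algebra_simps)
qed simp

lemma h_op_sum: "h_op N ds p (\<lambda>t. \<Sum>A\<in>S. c A * f A t) y = (\<Sum>A\<in>S. c A * h_op N ds p (f A) y)"
proof (induction ds arbitrary: p y)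
  case (Cons e ds)
  have "(\<lambda>t. h_op N ds (\<not> p) (\<lambda>t. \<Sum>A\<in>S. c A * f A t) t) = (\<lambda>t. \<Sum>A\<in>S. c A * h_op N ds (\<not> p) (f A) t)"
    using Cons.IH by simp
  then show ?case
    by (simp add: funpow_tail_sum_sum strict_tail_sum_def sum_distrib_left sum_divide_distrib sum.distrib[symmetric]
        sum.swap[of _ S] algebra_simps)
qed simp

lemma tail_sum_False_eq_strict:
  assumes "y < N"
  shows "tail_sum N False \<phi> y = strict_tail_sum N False \<phi> y + \<phi> y / real y"
proof (cases "y = 0")
  case False
  with assms have "{max 1 y..<N} = insert y {Suc y..<N}"
    by auto
  then show ?thesis
    by (simp add: tail_sum_def strict_tail_sum_def weight_def)
qed (simp add: tail_sum_def strict_tail_sum_def)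

lemma partial_fraction:
  assumes "0 < n" "n < N"
  shows "x / ((real N - real n) * real n) = (x / real n + x / (real N - real n)) / real N"
  using assms by (simp add: field_simps)

lemma strict_tail_sum_True_divide:
  "strict_tail_sum N True (\<lambda>n. \<phi> n / real n) y = (strict_tail_sum N False \<phi> y + strict_tail_sum N True \<phi> y) / real N"
  unfolding strict_tail_sum_def weight_def
  by (simp add: sum_divide_distrib sum.distrib[symmetric]) (rule sum.cong, auto simp: partial_fraction)

lemma tail_sum_True_divide:
  "tail_sum N True (\<lambda>n. \<phi> n / real n) y = (tail_sum N False \<phi> y + tail_sum N True \<phi> y) / real N"
  unfolding tail_sum_def weight_def
  by (simp add: sum_divide_distrib sum.distrib[symmetric]) (rule sum.cong, auto simp: partial_fraction)

definition pair_op :: "nat \<Rightarrow> nat \<Rightarrow> nat \<Rightarrow> (nat \<Rightarrow> real) \<Rightarrow> nat \<Rightarrow> real" where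
  "pair_op N a b g = strict_tail_sum N True ((tail_sum N True ^^ (a - 1)) ((tail_sum N False ^^ b) g))"

lemma h_op_Nil: "h_op N [] p \<phi> = \<phi>"
  by (simp add: fun_eq_iff)

lemma h_op_single_False:
  "h_op N [b] False g = (\<lambda>t. strict_tail_sum N False ((tail_sum N False ^^ (b - 1)) g) t + (if b = 1 then 1 / real N else 0) * g t)"
  by (simp add: fun_eq_iff h_op_Nil)

lemma funpow_tail_sum_False_eq_strict:
  assumes "b \<ge> 1" "t < N"
  shows "(tail_sum N False ^^ b) g t
    = strict_tail_sum N False ((tail_sum N False ^^ (b - 1)) g) t + (tail_sum N False ^^ (b - 1)) g t / real t"
proof -
  have "(tail_sum N False ^^ b) g t = tail_sum N False ((tail_sum N False ^^ (b - 1)) g) t"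
    using assms(1) by (cases b) auto
  then show ?thesis
    using tail_sum_False_eq_strict[OF assms(2)] by simp
qed

lemma pair_identity_1:
  assumes "b \<ge> 1" "N \<ge> 1"
  shows "pair_op N 1 b g y - (if 1 < b then pair_op N 1 (b - 1) g y / real N else 0)
    = h_op N [1, b] True g y - (if b = 1 then g y / real N ^ 2 else 0)"
proof -
  define Y where "Y = (tail_sum N False ^^ (b - 1)) g"
  define c where "c = (if b = 1 then 1 / real N else 0)"
  have "pair_op N 1 b g y = strict_tail_sum N True (\<lambda>t. strict_tail_sum N False Y t + Y t / real t) y"
    unfolding pair_op_def Y_def using assms(1)
    by (intro strict_tail_sum_cong) (simp add: funpow_tail_sum_False_eq_strict)
  also have "\<dots> = strict_tail_sum N True (strict_tail_sum N False Y) y + (strict_tail_sum N False Y y + strict_tail_sum N True Y y) / real N"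
    by (simp only: strict_tail_sum_add strict_tail_sum_True_divide)
  finally have pair: "pair_op N 1 b g y = \<dots>" .
  have h: "h_op N [1, b] True g y = strict_tail_sum N True (strict_tail_sum N False Y) y + c * strict_tail_sum N True g y
      + (strict_tail_sum N False Y y + c * g y) / real N"
  proof -
    have "h_op N [b] False g = (\<lambda>t. strict_tail_sum N False Y t + c * g t)"
      unfolding Y_def c_def by (rule h_op_single_False)
    moreover have "h_op N [1, b] True g y = strict_tail_sum N True (h_op N [b] False g) y + h_op N [b] False g y / real N"
      by simp
    ultimately show ?thesis
      by (simp only: strict_tail_sum_lin)
  qed
  show ?thesis
  proof (cases "b = 1")
    case True
    then show ?thesis
      unfolding pair h c_def using assms(2) by (simp add: Y_def field_simps power2_eq_square)
  next
    case False
    have "pair_op N 1 (b - 1) g y = strict_tail_sum N True Y y"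
      unfolding pair_op_def Y_def by simp
    then show ?thesis
      unfolding pair h c_def using False assms by (simp add: field_simps)
  qed
qed

lemma pair_identity_Suc:
  assumes "a \<ge> 1" "b \<ge> 1" "N \<ge> 1"
  shows "pair_op N (Suc a) b g y - (if 1 < b then pair_op N (Suc a) (b - 1) g y / real N else 0) - pair_op N a b g y / real N
    = h_op N [Suc a, b] True g y"
proof -
  define Y where "Y = (tail_sum N False ^^ (b - 1)) g"
  define Z where "Z = (tail_sum N False ^^ b) g"
  define X where "X = tail_sum N True ^^ (a - 1)"
  define c where "c = (if b = 1 then 1 / real N else 0)"
  have X_lin: "X (\<lambda>t. f t + d * h t) = (\<lambda>t. X f t + d * X h t)" for f h d
    unfolding X_def by (simp add: fun_eq_iff funpow_tail_sum_lin)
  have T_lin: "tail_sum N True (\<lambda>t. f t + d * h t) = (\<lambda>t. tail_sum N True f t + d * tail_sum N True h t)" for f h d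
    by (simp add: fun_eq_iff tail_sum_lin)
  have X_add: "X (\<lambda>t. f t + h t) = (\<lambda>t. X f t + X h t)" for f h
    using X_lin[where d = 1] by simp
  have X_Suc: "(tail_sum N True ^^ a) f = X (tail_sum N True f)" for f
  proof -
    obtain a' where "a = Suc a'"
      using assms(1) by (cases a) auto
    then show ?thesis
      unfolding X_def by (simp only: funpow_Suc_right comp_def diff_Suc_1)
  qed
  have "tail_sum N True Z t = tail_sum N True (\<lambda>t. strict_tail_sum N False Y t + Y t / real t) t" for t
    unfolding Z_def Y_def using assms(2)
    by (intro tail_sum_cong) (simp add: funpow_tail_sum_False_eq_strict)
  moreover have "tail_sum N False Y = Z"
    unfolding Y_def Z_def using assms(2) by (cases b) auto
  ultimately have TZ: "tail_sum N True Z = (\<lambda>t. tail_sum N True (strict_tail_sum N False Y) t + 1 / real N * (Z t + tail_sum N True Y t))"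
    using tail_sum_lin[where c = 1] by (simp add: fun_eq_iff tail_sum_True_divide)
  have pair: "pair_op N (Suc a) b g y = strict_tail_sum N True (X (tail_sum N True (strict_tail_sum N False Y))) y
      + 1 / real N * (strict_tail_sum N True (X Z) y + strict_tail_sum N True (X (tail_sum N True Y)) y)"
    unfolding pair_op_def diff_Suc_1 X_Suc Z_def[symmetric] TZ
    by (simp only: X_lin X_add strict_tail_sum_lin strict_tail_sum_add)
  have pair_left: "pair_op N a b g y = strict_tail_sum N True (X Z) y"
    unfolding pair_op_def X_def Z_def ..
  have hb: "h_op N [b] False g = (\<lambda>t. strict_tail_sum N False Y t + c * g t)"
    unfolding Y_def c_def by (rule h_op_single_False)
  have "h_op N [Suc a, b] True g y = strict_tail_sum N True ((tail_sum N True ^^ a) (h_op N [b] False g)) y"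
    using assms(1) by simp
  then have h: "h_op N [Suc a, b] True g y
      = strict_tail_sum N True (X (tail_sum N True (strict_tail_sum N False Y))) y + c * strict_tail_sum N True (X (tail_sum N True g)) y"
    by (simp only: hb X_Suc T_lin X_lin strict_tail_sum_lin)
  show ?thesis
  proof (cases "b = 1")
    case True
    then have "Y = g"
      by (simp add: Y_def)
    with True show ?thesis
      unfolding pair pair_left h c_def by (simp add: algebra_simps add_divide_distrib)
  next
    case False
    then have "pair_op N (Suc a) (b - 1) g y = strict_tail_sum N True (X (tail_sum N True Y)) y"
      unfolding pair_op_def Y_def by (simp add: X_Suc)
    moreover have "1 < b"
      using False assms(2) by simp
    ultimately show ?thesis
      unfolding pair pair_left h c_def by (simp add: algebra_simps add_divide_distrib)
  qed
qed

lemma pair_identity: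
  assumes "a \<ge> 1" "b \<ge> 1" "N \<ge> 1"
  shows "pair_op N a b g y - (if 1 < b then pair_op N a (b - 1) g y / real N else 0)
      - (if 1 < a then pair_op N (a - 1) b g y / real N else 0)
    = h_op N [a, b] True g y - (if a = 1 \<and> b = 1 then g y / real N ^ 2 else 0)"
proof (cases "a = 1")
  case True
  show ?thesis
    unfolding True using pair_identity_1[OF assms(2,3), of g y] by (simp del: h_op.simps)
next
  case False
  then obtain a' where a: "a = Suc a'" "a' \<ge> 1"
    using assms(1) by (cases a) auto
  show ?thesis
    unfolding a(1) using pair_identity_Suc[OF a(2) assms(2,3), of g y] a(2) by (simp del: h_op.simps)
qed

definition block :: "nat \<Rightarrow> nat \<Rightarrow> nat list" where
  "block a b = replicate (a - 1) 1 @ [b + 1]"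

lemma choose_Suc_mult: "Suc k * (n choose Suc k) = (n - k) * (n choose k)"
  using binomial_absorption[of k n] binomial_absorb_comp[of n k] by simp

lemma sum_choose_pred_upper: "(\<Sum>t\<in>{Suc j..y}. (t - 1) choose j) = y choose Suc j"
proof (induction y)
  case 0 then show ?case by simp
next
  case (Suc y)
  show ?case
  proof (cases "Suc j \<le> Suc y")
    case True
    then have "{Suc j..Suc y} = insert (Suc y) {Suc j..y}" by auto
    then show ?thesis using Suc by simp
  next
    case False
    then show ?thesis by simp
  qed
qed

definition transform_kernel :: "nat \<Rightarrow> nat \<Rightarrow> nat \<Rightarrow> real" where
  "transform_kernel N s t = real ((t - 1) choose (s - 1)) / ((real N - real t) * real ((N - 1) choose (s - 1)))"

definition transform_coeff :: "nat \<Rightarrow> nat \<Rightarrow> nat \<Rightarrow> real" where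
  "transform_coeff N s y = real ((y - 1) choose (s - 2)) / real ((N - 1) choose (s - 1))"

lemma real_choose_Suc_mult:
  assumes "1 \<le> s" "s < N"
  shows "real s * real ((N - 1) choose s) = (real N - real s) * real ((N - 1) choose (s - 1))"
proof -
  have "Suc (s - 1) * ((N - 1) choose Suc (s - 1)) = (N - 1 - (s - 1)) * ((N - 1) choose (s - 1))"
    by (rule choose_Suc_mult)
  moreover have "Suc (s - 1) = s" "N - 1 - (s - 1) = N - s" using assms by auto
  ultimately have "s * ((N - 1) choose s) = (N - s) * ((N - 1) choose (s - 1))" by simp
  then have "real (s * ((N - 1) choose s)) = real ((N - s) * ((N - 1) choose (s - 1)))" by simp
  then show ?thesis using assms by (simp add: of_nat_diff)
qed

lemma transform_kernel_diff:
  assumes "1 \<le> s" "s < N" "1 \<le> t" "t < N"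
  shows "transform_kernel N s t - transform_kernel N (Suc s) t
    = real ((t - 1) choose (s - 1)) / (real ((N - 1) choose (s - 1)) * (real N - real s))"
proof -
  define A where "A = real ((t - 1) choose (s - 1))"
  define B where "B = real ((N - 1) choose (s - 1))"
  have B: "real ((N - 1) choose s) = (real N - real s) * B / real s"
    using real_choose_Suc_mult[OF assms(1,2)] assms(1) unfolding B_def by (simp add: field_simps)
  have A: "real ((t - 1) choose s) = (real t - real s) * A / real s"
  proof (cases "s \<le> t")
    case True
    then show ?thesis
      using real_choose_Suc_mult[of s t] assms unfolding A_def by (cases "s = t") (simp_all add: field_simps)
  next
    case False
    then have "(t - 1) choose s = 0" "(t - 1) choose (s - 1) = 0"
      using assms by (auto intro!: binomial_eq_0)
    then show ?thesis
      unfolding A_def by (simp del: binomial_eq_0_iff)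
  qed
  have field: "a / (v * b) - (u - v) * a / y / (v * (u * b / y)) = a / (b * u)"
    if "u \<noteq> 0" "v \<noteq> 0" "b \<noteq> 0" "y \<noteq> 0" for a b u v y :: real
    using that by (simp add: field_simps)
  have "real t - real s = (real N - real s) - (real N - real t)"
    by simp
  moreover have "B > 0"
    using assms unfolding B_def by simp
  ultimately show ?thesis
    unfolding transform_kernel_def A_def[symmetric] B_def[symmetric] diff_Suc_1 A B
    using field[of "real N - real s" "real N - real t" B "real s" A] assms by simp
qed

lemma transform_coeff_Suc_divide:
  assumes "1 \<le> s" "s < N"
  shows "transform_coeff N (Suc s) y / real s = real ((y - 1) choose (s - 1)) / (real ((N - 1) choose (s - 1)) * (real N - real s))"
proof -
  have "transform_coeff N (Suc s) y = real ((y - 1) choose (s - 1)) / real ((N - 1) choose s)"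
    unfolding transform_coeff_def using assms by (simp add: numeral_2_eq_2)
  then have "transform_coeff N (Suc s) y / real s = real ((y - 1) choose (s - 1)) / (real s * real ((N - 1) choose s))"
    by (simp add: mult.commute)
  also have "real s * real ((N - 1) choose s) = (real N - real s) * real ((N - 1) choose (s - 1))"
    by (rule real_choose_Suc_mult[OF assms])
  finally show ?thesis by (simp add: mult.commute)
qed

lemma transform_kernel_eq_0: "y < s \<Longrightarrow> 1 \<le> y \<Longrightarrow> transform_kernel N s y = 0"
  unfolding transform_kernel_def by (simp add: binomial_eq_0)

lemma sum_transform_coeff_Suc_divide:
  assumes "1 \<le> s" "s \<le> Suc y" "1 \<le> y" "y < N"
  shows "(\<Sum>m\<in>{s..y}. transform_coeff N (Suc m) y / real m) = transform_kernel N s y"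
  using assms(2,1)
proof (induction s rule: inc_induct)
  case base
  then show ?case using assms(3) by (simp add: transform_kernel_eq_0)
next
  case (step n)
  have n: "1 \<le> n" "n < N" "n \<le> y" using step assms by auto
  have "{n..y} = insert n {Suc n..y}" using n by auto
  then have "(\<Sum>m\<in>{n..y}. transform_coeff N (Suc m) y / real m) = transform_coeff N (Suc n) y / real n + transform_kernel N (Suc n) y"
    using step by simp
  also have "\<dots> = transform_kernel N n y" using transform_coeff_Suc_divide[OF n(1,2)] transform_kernel_diff[OF n(1,2) assms(3,4)] by simp
  finally show ?case .
qed

lemma sum_transform_coeff:
  assumes "2 \<le> s"
  shows "(\<Sum>t\<in>{s-1..<y}. transform_coeff N s t) = real ((y - 1) choose (s - 1)) / real ((N - 1) choose (s - 1))"
proof (cases "y = 0")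
  case True
  then show ?thesis using assms by (simp add: binomial_eq_0)
next
  case False
  have "{s-1..<y} = {Suc (s - 2)..y - 1}" using False assms by auto
  then have "(\<Sum>t\<in>{s-1..<y}. real ((t - 1) choose (s - 2))) = real ((y - 1) choose Suc (s - 2))"
    using sum_choose_pred_upper[of "s - 2" "y - 1"] by (simp del: of_nat_sum add: of_nat_sum[symmetric])
  moreover have "Suc (s - 2) = s - 1" using assms by simp
  ultimately show ?thesis unfolding transform_coeff_def by (simp add: sum_divide_distrib[symmetric])
qed

lemma transform_kernel_step:
  assumes "1 \<le> n" "n < N" "1 \<le> y" "y < N"
  shows "transform_kernel N (Suc n) y / real n + transform_kernel N n y / (real N - real n)
    = real (y choose n) / (real ((N - 1) choose (n - 1)) * (real N - real n) * (real N - real y))"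
proof -
  define B where "B = real ((N - 1) choose (n - 1))"
  have B0: "B > 0" unfolding B_def using assms by simp
  have nz: "real n \<noteq> 0" "real N - real n \<noteq> 0" "real N - real y \<noteq> 0" using assms by auto
  have cs: "real n * real ((N - 1) choose n) = (real N - real n) * B" using real_choose_Suc_mult[OF assms(1,2)] unfolding B_def .
  have pas: "y choose n = ((y - 1) choose n) + ((y - 1) choose (n - 1))"
  proof -
    have "Suc (y - 1) choose Suc (n - 1) = ((y - 1) choose (n - 1)) + ((y - 1) choose Suc (n - 1))" by simp
    moreover have "Suc (y - 1) = y" "Suc (n - 1) = n" using assms by auto
    ultimately show ?thesis by simp
  qed
  have "transform_kernel N (Suc n) y / real n = real ((y - 1) choose n) / ((real N - real y) * (real n * real ((N - 1) choose n)))"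
    unfolding transform_kernel_def by (simp add: mult_ac)
  also have "\<dots> = real ((y - 1) choose n) / ((real N - real y) * ((real N - real n) * B))" unfolding cs ..
  finally have k1: "transform_kernel N (Suc n) y / real n = real ((y - 1) choose n) / ((real N - real y) * ((real N - real n) * B))" .
  have k2: "transform_kernel N n y / (real N - real n) = real ((y - 1) choose (n - 1)) / ((real N - real y) * ((real N - real n) * B))"
    unfolding transform_kernel_def B_def by (simp add: mult_ac)
  show ?thesis unfolding k1 k2 pas B_def[symmetric] by (simp add: add_divide_distrib mult_ac)
qed

lemma sum_transform_kernel_step:
  assumes "1 \<le> s" "s \<le> Suc y" "1 \<le> y" "y < N"
  shows "(\<Sum>n\<in>{s..y}. transform_kernel N (Suc n) y / real n + transform_kernel N n y / (real N - real n)) = (\<Sum>t\<in>{s..y}. transform_kernel N s t) / (real N - real y)"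
  using assms(2,1)
proof (induction s rule: inc_induct)
  case base
  then show ?case by simp
next
  case (step n)
  have n: "1 \<le> n" "n < N" "n \<le> y" using step assms by auto
  have "{n..y} = insert n {Suc n..y}" using n by auto
  then have "(\<Sum>m\<in>{n..y}. transform_kernel N (Suc m) y / real m + transform_kernel N m y / (real N - real m))
      = (transform_kernel N (Suc n) y / real n + transform_kernel N n y / (real N - real n)) + (\<Sum>t\<in>{Suc n..y}. transform_kernel N (Suc n) t) / (real N - real y)"
    using step by simp
  also have "\<dots> = real (y choose n) / (real ((N - 1) choose (n - 1)) * (real N - real n) * (real N - real y))
       + (\<Sum>t\<in>{Suc n..y}. transform_kernel N (Suc n) t) / (real N - real y)"
    using transform_kernel_step[OF n(1,2) assms(3,4)] by simp
  also have "\<dots> = (\<Sum>t\<in>{n..y}. transform_kernel N n t) / (real N - real y)"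
  proof -
    have "(\<Sum>t\<in>{n..y}. transform_kernel N n t) = (\<Sum>t\<in>{n..y}. (transform_kernel N n t - transform_kernel N (Suc n) t)) + (\<Sum>t\<in>{n..y}. transform_kernel N (Suc n) t)"
      by (simp add: sum_subtractf)
    also have "(\<Sum>t\<in>{n..y}. (transform_kernel N n t - transform_kernel N (Suc n) t)) = (\<Sum>t\<in>{n..y}. real ((t - 1) choose (n - 1)) / (real ((N - 1) choose (n - 1)) * (real N - real n)))"
      by (rule sum.cong[OF refl], rule transform_kernel_diff) (use n assms in auto)
    also have "\<dots> = real (y choose n) / (real ((N - 1) choose (n - 1)) * (real N - real n))"
    proof -
      have "(\<Sum>t\<in>{Suc (n - 1)..y}. (t - 1) choose (n - 1)) = y choose Suc (n - 1)" by (rule sum_choose_pred_upper)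
      moreover have "Suc (n - 1) = n" using n by simp
      ultimately have "(\<Sum>t\<in>{n..y}. real ((t - 1) choose (n - 1))) = real (y choose n)"
        by (metis of_nat_sum)
      then show ?thesis by (simp add: sum_divide_distrib[symmetric])
    qed
    also have "(\<Sum>t\<in>{n..y}. transform_kernel N (Suc n) t) = (\<Sum>t\<in>{Suc n..y}. transform_kernel N (Suc n) t)"
    proof -
      have "{n..y} = insert n {Suc n..y}" using n by auto
      moreover have "transform_kernel N (Suc n) n = 0" using n by (simp add: transform_kernel_eq_0)
      ultimately show ?thesis by simp
    qed
    finally show ?thesis by (simp add: add_divide_distrib)
  qed
  finally show ?case .
qed

definition transform :: "nat \<Rightarrow> (nat \<Rightarrow> real) \<Rightarrow> nat \<Rightarrow> real" where
  "transform N g s = (if 2 \<le> s \<and> s \<le> N then (\<Sum>y\<in>{s-1..<N}. transform_coeff N s y * g y) else g (s - 1))"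

definition power_sum :: "nat \<Rightarrow> nat \<Rightarrow> (nat \<Rightarrow> real) \<Rightarrow> nat \<Rightarrow> real" where
  "power_sum N k \<psi> s = (\<Sum>m\<in>{max 1 s..<N}. \<psi> (Suc m) / real m ^ k)"


lemma sum_triangle_swap: "(\<Sum>m\<in>{a..<N::nat}. \<Sum>y\<in>{m..<N}. f m y) = (\<Sum>y\<in>{a..<N}. \<Sum>m\<in>{a..y}. f m y)"
proof -
  have "(\<Sum>m\<in>{a..<N}. \<Sum>y\<in>{m..<N}. f m y) = (\<Sum>m\<in>{a..<N}. \<Sum>y\<in>{y. y \<in> {a..<N} \<and> m \<le> y}. f m y)"
    by (rule sum.cong[OF refl], rule sum.cong) (auto intro: order.trans)
  also have "\<dots> = (\<Sum>y\<in>{a..<N}. \<Sum>m\<in>{m. m \<in> {a..<N} \<and> m \<le> y}. f m y)"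
    by (rule sum.swap_restrict) auto
  also have "\<dots> = (\<Sum>y\<in>{a..<N}. \<Sum>m\<in>{a..y}. f m y)"
    by (rule sum.cong[OF refl], rule sum.cong) auto
  finally show ?thesis .
qed

lemma sum_triangle_swap_strict: "(\<Sum>m\<in>{a..<N::nat}. \<Sum>y\<in>{Suc m..<N}. f m y) = (\<Sum>y\<in>{a..<N}. \<Sum>m\<in>{a..<y}. f m y)"
proof -
  have "(\<Sum>m\<in>{a..<N}. \<Sum>y\<in>{Suc m..<N}. f m y) = (\<Sum>m\<in>{a..<N}. \<Sum>y\<in>{y. y \<in> {a..<N} \<and> m < y}. f m y)"
    by (rule sum.cong[OF refl], rule sum.cong) auto
  also have "\<dots> = (\<Sum>y\<in>{a..<N}. \<Sum>m\<in>{m. m \<in> {a..<N} \<and> m < y}. f m y)"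
    by (rule sum.swap_restrict) auto
  also have "\<dots> = (\<Sum>y\<in>{a..<N}. \<Sum>m\<in>{a..<y}. f m y)"
    by (rule sum.cong[OF refl], rule sum.cong) auto
  finally show ?thesis .
qed

lemma transform_Suc: "1 \<le> m \<Longrightarrow> m < N \<Longrightarrow> transform N g (Suc m) = (\<Sum>y\<in>{m..<N}. transform_coeff N (Suc m) y * g y)"
  unfolding transform_def by auto

lemma power_sum_one_transform_eq_kernel: "power_sum N 1 (transform N g) s = (\<Sum>y\<in>{max 1 s..<N}. g y * transform_kernel N (max 1 s) y)"
proof -
  let ?s = "max 1 s"
  have "power_sum N 1 (transform N g) s = (\<Sum>m\<in>{?s..<N}. \<Sum>y\<in>{m..<N}. transform_coeff N (Suc m) y * g y / real m)"
    unfolding power_sum_def by (rule sum.cong[OF refl]) (auto simp: transform_Suc sum_divide_distrib)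
  also have "\<dots> = (\<Sum>y\<in>{?s..<N}. \<Sum>m\<in>{?s..y}. transform_coeff N (Suc m) y * g y / real m)"
    by (rule sum_triangle_swap)
  also have "\<dots> = (\<Sum>y\<in>{?s..<N}. g y * transform_kernel N ?s y)"
  proof (rule sum.cong[OF refl])
    fix y assume y: "y \<in> {?s..<N}"
    have "(\<Sum>m\<in>{?s..y}. transform_coeff N (Suc m) y * g y / real m) = g y * (\<Sum>m\<in>{?s..y}. transform_coeff N (Suc m) y / real m)"
      by (simp add: sum_distrib_left mult_ac)
    also have "\<dots> = g y * transform_kernel N ?s y" using y by (subst sum_transform_coeff_Suc_divide) auto
    finally show "(\<Sum>m\<in>{?s..y}. transform_coeff N (Suc m) y * g y / real m) = g y * transform_kernel N ?s y" .
  qed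
  finally show ?thesis .
qed

lemma transform_strict_tail_sum_eq_kernel:
  assumes "2 \<le> s" "s \<le> N"
  shows "transform N (strict_tail_sum N True g) s = (\<Sum>y\<in>{s..<N}. g y * transform_kernel N s y)"
proof -
  have "transform N (strict_tail_sum N True g) s
      = (\<Sum>t\<in>{s - 1..<N}. \<Sum>y\<in>{Suc t..<N}. transform_coeff N s t * (weight N True y * g y))"
    unfolding transform_def strict_tail_sum_def using assms by (simp add: sum_distrib_left)
  also have "\<dots> = (\<Sum>y\<in>{s - 1..<N}. (\<Sum>t\<in>{s - 1..<y}. transform_coeff N s t) * (weight N True y * g y))"
    by (subst sum_triangle_swap_strict) (simp add: sum_distrib_right)
  also have "\<dots> = (\<Sum>y\<in>{s - 1..<N}. g y * transform_kernel N s y)"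
    unfolding sum_transform_coeff[OF assms(1)] by (intro sum.cong refl) (simp add: transform_kernel_def weight_def field_simps)
  also have "\<dots> = (\<Sum>y\<in>{s..<N}. g y * transform_kernel N s y)"
  proof -
    have "{s - 1..<N} = insert (s - 1) {s..<N}"
      using assms by auto
    moreover have "transform_kernel N s (s - 1) = 0" "s - 1 \<notin> {s..<N}"
      using assms(1) by (auto simp: transform_kernel_def binomial_eq_0)
    ultimately show ?thesis
      by simp
  qed
  finally show ?thesis .
qed

lemma power_sum_one_transform: "power_sum N 1 (transform N g) s = transform N (strict_tail_sum N True g) s"
proof -
  consider "2 \<le> s" "s \<le> N" | "s \<le> 1" | "N < s"
    by linarith
  then show ?thesis
  proof cases
    case 1
    then show ?thesis
      unfolding power_sum_one_transform_eq_kernel transform_strict_tail_sum_eq_kernel[OF 1] by simp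
  next
    case 2
    then have "transform N (strict_tail_sum N True g) s = (\<Sum>y\<in>{1..<N}. weight N True y * g y)"
      unfolding transform_def strict_tail_sum_def by simp
    also have "\<dots> = (\<Sum>y\<in>{1..<N}. g y * transform_kernel N 1 y)"
      by (rule sum.cong) (auto simp: transform_kernel_def weight_def)
    finally show ?thesis
      unfolding power_sum_one_transform_eq_kernel using 2 by (simp add: max_def)
  next
    case 3
    then show ?thesis
      unfolding power_sum_one_transform_eq_kernel transform_def strict_tail_sum_def by auto
  qed
qed

lemma sum_transform_coeff_Suc_divide_upper:
  assumes "1 \<le> m" "m \<le> y"
  shows "(\<Sum>t\<in>{m..y}. transform_coeff N (Suc m) t) / real y = transform_coeff N (Suc m) y / real m"
proof -
  define C where "C = real ((N - 1) choose m)"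
  have coeff: "transform_coeff N (Suc m) t = real ((t - 1) choose (m - 1)) / C" for t
    unfolding transform_coeff_def C_def using assms(1) by (simp add: numeral_2_eq_2)
  have "Suc (m - 1) = m"
    using assms(1) by simp
  then have hockey: "(\<Sum>t\<in>{m..y}. (t - 1) choose (m - 1)) = y choose m"
    using sum_choose_pred_upper[of "m - 1" y] by simp
  have absorb: "m * (y choose m) = y * ((y - 1) choose (m - 1))"
    using assms(1) by (intro times_binomial_minus1_eq) simp
  have "(\<Sum>t\<in>{m..y}. real ((t - 1) choose (m - 1))) = real (y choose m)"
    using arg_cong[OF hockey, of real] by simp
  moreover have "real (y choose m) / real y = real ((y - 1) choose (m - 1)) / real m"
    using arg_cong[OF absorb, of real] assms by (simp add: field_simps)
  ultimately show ?thesis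
    using assms by (cases "C = 0") (simp_all add: coeff sum_divide_distrib[symmetric] field_simps)
qed

lemma transform_Suc_divide:
  assumes "1 \<le> m" "m < N"
  shows "transform N g (Suc m) / real m = transform N (tail_sum N False g) (Suc m)"
proof -
  have "transform N (tail_sum N False g) (Suc m)
      = (\<Sum>t\<in>{m..<N}. \<Sum>y\<in>{t..<N}. transform_coeff N (Suc m) t * (g y / real y))"
    unfolding transform_Suc[OF assms] tail_sum_def weight_def
    by (rule sum.cong[OF refl]) (use assms in \<open>auto simp: sum_distrib_left intro!: sum.cong\<close>)
  also have "\<dots> = (\<Sum>y\<in>{m..<N}. (\<Sum>t\<in>{m..y}. transform_coeff N (Suc m) t) / real y * g y)"
    by (subst sum_triangle_swap) (simp add: sum_distrib_right sum_divide_distrib)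
  also have "\<dots> = (\<Sum>y\<in>{m..<N}. transform_coeff N (Suc m) y * g y / real m)"
    using assms(1) by (intro sum.cong refl) (simp add: sum_transform_coeff_Suc_divide_upper)
  also have "\<dots> = transform N g (Suc m) / real m"
    unfolding transform_Suc[OF assms] by (simp add: sum_divide_distrib)
  finally show ?thesis
    by simp
qed

lemma power_sum_Suc_transform: "power_sum N (Suc k) (transform N g) s = power_sum N k (transform N (tail_sum N False g)) s"
  unfolding power_sum_def
proof (rule sum.cong[OF refl])
  fix m assume m: "m \<in> {max 1 s..<N}"
  then have "1 \<le> m" "m < N" by auto
  then show "transform N g (Suc m) / real m ^ Suc k = transform N (tail_sum N False g) (Suc m) / real m ^ k"
    using transform_Suc_divide[of m N g] by (simp add: field_simps)
qed

lemma power_sum_transform: "power_sum N (Suc b) (transform N g) s = power_sum N 1 (transform N ((tail_sum N False ^^ b) g)) s"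
proof (induction b arbitrary: g)
  case 0 then show ?case by simp
next
  case (Suc b)
  have "power_sum N (Suc (Suc b)) (transform N g) s = power_sum N (Suc b) (transform N (tail_sum N False g)) s" by (rule power_sum_Suc_transform)
  also have "\<dots> = power_sum N 1 (transform N ((tail_sum N False ^^ b) (tail_sum N False g))) s" by (rule Suc.IH)
  also have "(tail_sum N False ^^ b) (tail_sum N False g) = (tail_sum N False ^^ Suc b) g" by (simp only: funpow_Suc_right comp_def)
  finally show ?case .
qed

lemma zeta_op_one: "zeta_op N [1] \<psi> s = (\<Sum>m\<in>{max 1 s..<N}. \<psi> (Suc m) / real m + \<psi> m / (real N - real m))"
  by simp

lemma power_sum_one_transform_from:
  assumes "n \<ge> 1"
  shows "power_sum N 1 (transform N g) n = (\<Sum>y\<in>{n..<N}. g y * transform_kernel N n y)"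
    and "power_sum N 1 (transform N g) (Suc n) = (\<Sum>y\<in>{n..<N}. g y * transform_kernel N (Suc n) y)"
proof -
  show "power_sum N 1 (transform N g) n = (\<Sum>y\<in>{n..<N}. g y * transform_kernel N n y)"
    unfolding power_sum_one_transform_eq_kernel using assms by (simp add: max_absorb2)
  have "transform_kernel N (Suc n) n = 0"
    using assms by (simp add: transform_kernel_eq_0)
  then have "(\<Sum>y\<in>{n..<N}. g y * transform_kernel N (Suc n) y) = (\<Sum>y\<in>{Suc n..<N}. g y * transform_kernel N (Suc n) y)"
  proof (cases "n < N")
    case True
    then have "{n..<N} = insert n {Suc n..<N}"
      by auto
    with \<open>transform_kernel N (Suc n) n = 0\<close> show ?thesis
      by simp
  qed simp
  then show "power_sum N 1 (transform N g) (Suc n) = (\<Sum>y\<in>{n..<N}. g y * transform_kernel N (Suc n) y)"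
    unfolding power_sum_one_transform_eq_kernel by simp
qed

lemma zeta_op_one_power_sum_transform:
  "zeta_op N [1] (power_sum N 1 (transform N g)) s = power_sum N 1 (transform N (tail_sum N True g)) s"
proof -
  let ?s = "max 1 s"
  let ?step = "\<lambda>n y. transform_kernel N (Suc n) y / real n + transform_kernel N n y / (real N - real n)"
  have "zeta_op N [1] (power_sum N 1 (transform N g)) s = (\<Sum>n\<in>{?s..<N}. \<Sum>y\<in>{n..<N}. g y * ?step n y)"
    unfolding zeta_op_one
  proof (intro sum.cong refl)
    fix n assume "n \<in> {?s..<N}"
    then have "n \<ge> 1"
      by simp
    then show "power_sum N 1 (transform N g) (Suc n) / real n + power_sum N 1 (transform N g) n / (real N - real n)
        = (\<Sum>y\<in>{n..<N}. g y * ?step n y)"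
      unfolding power_sum_one_transform_from[OF \<open>n \<ge> 1\<close>]
      by (simp add: sum_divide_distrib sum.distrib[symmetric] algebra_simps)
  qed
  also have "\<dots> = (\<Sum>y\<in>{?s..<N}. g y * (\<Sum>n\<in>{?s..y}. ?step n y))"
    by (subst sum_triangle_swap) (simp add: sum_distrib_left)
  also have "\<dots> = (\<Sum>y\<in>{?s..<N}. \<Sum>t\<in>{?s..y}. weight N True y * g y * transform_kernel N ?s t)"
    by (intro sum.cong refl) (simp add: sum_transform_kernel_step weight_def sum_distrib_left sum_divide_distrib)
  also have "\<dots> = (\<Sum>t\<in>{?s..<N}. tail_sum N True g t * transform_kernel N ?s t)"
    by (subst sum_triangle_swap[symmetric]) (auto simp: tail_sum_def sum_distrib_right max_absorb2 intro!: sum.cong)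
  finally show ?thesis
    unfolding power_sum_one_transform_eq_kernel by (simp add: mult.commute)
qed

lemma funpow_zeta_op_one_power_sum_transform: "(zeta_op N [1] ^^ j) (power_sum N 1 (transform N g)) s = power_sum N 1 (transform N ((tail_sum N True ^^ j) g)) s"
proof (induction j arbitrary: s)
  case 0 then show ?case by simp
next
  case (Suc j)
  have "(zeta_op N [1] ^^ Suc j) (power_sum N 1 (transform N g)) s = zeta_op N [1] ((zeta_op N [1] ^^ j) (power_sum N 1 (transform N g))) s" by simp
  also have "(zeta_op N [1] ^^ j) (power_sum N 1 (transform N g)) = power_sum N 1 (transform N ((tail_sum N True ^^ j) g))" using Suc.IH by (rule ext)
  also have "zeta_op N [1] (power_sum N 1 (transform N ((tail_sum N True ^^ j) g))) s = power_sum N 1 (transform N (tail_sum N True ((tail_sum N True ^^ j) g))) s" by (rule zeta_op_one_power_sum_transform)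
  finally show ?case by simp
qed

lemma zeta_op_single: "k \<ge> 2 \<Longrightarrow> zeta_op N [k] \<psi> = power_sum N k \<psi>"
  by (rule ext) (simp add: power_sum_def)

lemma zeta_op_Cons_one: "zeta_op N (1 # ks) \<phi> = zeta_op N [1] (zeta_op N ks \<phi>)"
  using zeta_op_append[of N "[1]" ks] by simp

lemma zeta_op_replicate_one:
  assumes "k \<ge> 2"
  shows "zeta_op N (replicate j 1 @ [k]) \<psi> = (zeta_op N [1] ^^ j) (power_sum N k \<psi>)"
proof (induction j)
  case 0
  then show ?case by (simp add: zeta_op_single assms)
next
  case (Suc j)
  have "zeta_op N (replicate (Suc j) 1 @ [k]) \<psi> = zeta_op N [1] (zeta_op N (replicate j 1 @ [k]) \<psi>)"
    unfolding replicate_Suc append_Cons by (rule zeta_op_Cons_one)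
  then show ?case
    by (simp only: Suc.IH funpow.simps comp_def)
qed

lemma zeta_op_block_transform:
  assumes "a \<ge> 1" "b \<ge> 1"
  shows "zeta_op N (block a b) (transform N g) s = transform N (pair_op N a b g) s"
proof -
  have bk: "block a b = replicate (a - 1) 1 @ [Suc b]" unfolding block_def by simp
  have "zeta_op N (block a b) (transform N g) s = (zeta_op N [1] ^^ (a - 1)) (power_sum N (Suc b) (transform N g)) s"
    unfolding bk using assms by (subst zeta_op_replicate_one) auto
  also have "power_sum N (Suc b) (transform N g) = power_sum N 1 (transform N ((tail_sum N False ^^ b) g))"
    by (rule ext) (rule power_sum_transform)
  also have "(zeta_op N [1] ^^ (a - 1)) (power_sum N 1 (transform N ((tail_sum N False ^^ b) g))) s = power_sum N 1 (transform N ((tail_sum N True ^^ (a - 1)) ((tail_sum N False ^^ b) g))) s"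
    by (rule funpow_zeta_op_one_power_sum_transform)
  also have "\<dots> = transform N (pair_op N a b g) s" unfolding power_sum_one_transform pair_op_def ..
  finally show ?thesis .
qed

lemma transform_lin: "transform N (\<lambda>y. f y - c * h y - d * k y) s = transform N f s - c * transform N h s - d * transform N k s"
  unfolding transform_def by (simp add: sum_subtractf sum_distrib_left sum.distrib algebra_simps)

lemma minus_delta_Cons: "minus_delta (a # c) A = (a - (if 1 \<in> A then 1 else 0)) # minus_delta c {i. Suc i \<in> A}"
  unfolding minus_delta_def by (simp add: upt_conv_Cons map_Suc_upt[symmetric] del: upt_Suc)

lemma delete_pos_Cons: "delete_pos (a # c) A = (if 1 \<in> A then [] else [a]) @ delete_pos c {i. Suc i \<in> A}"
  unfolding delete_pos_def by (simp add: upt_conv_Cons map_Suc_upt[symmetric] filter_map comp_def del: upt_Suc)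

lemma minus_delta_cong: "(\<And>i. i \<ge> 1 \<Longrightarrow> i \<in> B \<longleftrightarrow> i \<in> B') \<Longrightarrow> minus_delta c B = minus_delta c B'"
  unfolding minus_delta_def by auto

lemma delete_pos_cong: "(\<And>i. i \<ge> 1 \<Longrightarrow> i \<in> B \<longleftrightarrow> i \<in> B') \<Longrightarrow> delete_pos c B = delete_pos c B'"
  unfolding delete_pos_def by (metis (mono_tags, lifting) Suc_eq_plus1 le_add2)

abbreviation shift2 :: "nat set \<Rightarrow> nat set" where
  "shift2 C \<equiv> (\<lambda>i. Suc (Suc i)) ` C"

lemma mem_shift2_iff: "X \<subseteq> {1, 2} \<Longrightarrow> i \<ge> 1 \<Longrightarrow> Suc (Suc i) \<in> X \<union> shift2 C \<longleftrightarrow> i \<in> C"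
  by auto

lemma minus_delta_shift2:
  assumes "X \<subseteq> {1, 2}" "0 \<notin> C"
  shows "minus_delta (a # b # c) (X \<union> shift2 C)
    = (a - (if 1 \<in> X then 1 else 0)) # (b - (if 2 \<in> X then 1 else 0)) # minus_delta c C"
proof -
  have "minus_delta c {i. Suc i \<in> {i. Suc i \<in> X \<union> shift2 C}} = minus_delta c C"
    by (rule minus_delta_cong) (use mem_shift2_iff[OF assms(1)] in auto)
  moreover have "1 \<in> X \<union> shift2 C \<longleftrightarrow> 1 \<in> X" "2 \<in> X \<union> shift2 C \<longleftrightarrow> 2 \<in> X"
    using assms(2) by auto
  ultimately show ?thesis
    by (simp add: minus_delta_Cons numeral_2_eq_2)
qed

lemma delete_pos_shift2:
  assumes "X \<subseteq> {1, 2}" "0 \<notin> C"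
  shows "delete_pos (a # b # c) (X \<union> shift2 C)
    = (if 1 \<in> X then [] else [a]) @ (if 2 \<in> X then [] else [b]) @ delete_pos c C"
proof -
  have "delete_pos c {i. Suc i \<in> {i. Suc i \<in> X \<union> shift2 C}} = delete_pos c C"
    by (rule delete_pos_cong) (use mem_shift2_iff[OF assms(1)] in auto)
  moreover have "1 \<in> X \<union> shift2 C \<longleftrightarrow> 1 \<in> X" "2 \<in> X \<union> shift2 C \<longleftrightarrow> 2 \<in> X"
    using assms(2) by auto
  ultimately show ?thesis
    by (simp add: delete_pos_Cons numeral_2_eq_2)
qed

lemma card_shift2:
  assumes "X \<subseteq> {1, 2}" "finite C" "0 \<notin> C"
  shows "card (X \<union> shift2 C) = card X + card C"
proof -
  have "finite X"
    using assms(1) by (rule finite_subset) simp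
  moreover have "X \<inter> shift2 C = {}"
    using assms by auto
  ultimately show ?thesis
    using assms(2) by (simp add: card_Un_disjoint card_image inj_on_def)
qed

lemma pairs_shift2:
  assumes "X \<subseteq> {1, 2}" "0 \<notin> C"
  shows "(\<forall>r\<in>{1..Suc m}. \<not> {2*r - 1, 2*r} \<subseteq> X \<union> shift2 C)
    \<longleftrightarrow> \<not> {1, 2} \<subseteq> X \<and> (\<forall>r\<in>{1..m}. \<not> {2*r - 1, 2*r} \<subseteq> C)"
proof -
  have first: "{2*1 - 1, 2*1} \<subseteq> X \<union> shift2 C \<longleftrightarrow> {1, 2} \<subseteq> X"
    using assms(2) by auto
  have later: "{2 * Suc r - 1, 2 * Suc r} \<subseteq> X \<union> shift2 C \<longleftrightarrow> {2*r - 1, 2*r} \<subseteq> C" if "r \<in> {1..m}" for r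
  proof -
    have "2 * Suc r - 1 = Suc (Suc (2*r - 1))" "2 * Suc r = Suc (Suc (2*r))" "2*r - 1 \<ge> 1" "2*r \<ge> 1"
      using that by auto
    then show ?thesis
      using mem_shift2_iff[OF assms(1), of "2*r - 1" C] mem_shift2_iff[OF assms(1), of "2*r" C]
      by (simp only: insert_subset empty_subsetI simp_thms)
  qed
  have "{1..Suc m} = insert 1 (Suc ` {1..m})"
    by (auto simp: image_iff)
  then have "(\<forall>r\<in>{1..Suc m}. \<not> {2*r - 1, 2*r} \<subseteq> X \<union> shift2 C)
      \<longleftrightarrow> \<not> {2*1 - 1, 2*1} \<subseteq> X \<union> shift2 C \<and> (\<forall>r\<in>{1..m}. \<not> {2 * Suc r - 1, 2 * Suc r} \<subseteq> X \<union> shift2 C)"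
    by (simp only: ball_simps)
  also have "\<dots> \<longleftrightarrow> \<not> {1, 2} \<subseteq> X \<and> (\<forall>r\<in>{1..m}. \<not> {2*r - 1, 2*r} \<subseteq> C)"
    using later by (simp only: first) (metis (no_types, lifting))
  finally show ?thesis .
qed

lemma odd_even_shift2:
  assumes "X \<subseteq> {1, 2}" "0 \<notin> C"
  shows "odd_even (X \<union> shift2 C) \<longleftrightarrow> (1 \<in> X \<longleftrightarrow> 2 \<in> X) \<and> odd_even C"
proof -
  let ?A = "X \<union> shift2 C"
  have "1 \<notin> shift2 C" "2 \<notin> shift2 C"
    using assms(2) by auto
  moreover have "(\<forall>i\<in>X. Q i) \<longleftrightarrow> (1 \<in> X \<longrightarrow> Q 1) \<and> (2 \<in> X \<longrightarrow> Q 2)" for Q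
    using assms(1) by auto
  ultimately have low: "(\<forall>i\<in>X. (odd i \<longrightarrow> i + 1 \<in> ?A) \<and> (even i \<longrightarrow> i - 1 \<in> ?A)) \<longleftrightarrow> (1 \<in> X \<longleftrightarrow> 2 \<in> X)"
    by (simp add: numeral_2_eq_2) blast
  have step: "(odd (Suc (Suc i)) \<longrightarrow> Suc (Suc i) + 1 \<in> ?A) \<and> (even (Suc (Suc i)) \<longrightarrow> Suc (Suc i) - 1 \<in> ?A)
      \<longleftrightarrow> (odd i \<longrightarrow> i + 1 \<in> C) \<and> (even i \<longrightarrow> i - 1 \<in> C)" if "i \<in> C" for i
  proof -
    from that assms(2) have "i \<ge> 1"
      by (cases i) auto
    moreover have "Suc (Suc i) + 1 = Suc (Suc (i + 1))"
      by simp
    moreover have "even i \<Longrightarrow> i - 1 \<ge> 1 \<and> Suc (Suc i) - 1 = Suc (Suc (i - 1))"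
      using \<open>i \<ge> 1\<close> by presburger
    ultimately show ?thesis
      using mem_shift2_iff[OF assms(1), of "i + 1" C] mem_shift2_iff[OF assms(1), of "i - 1" C] by auto
  qed
  have "(\<forall>i\<in>shift2 C. (odd i \<longrightarrow> i + 1 \<in> ?A) \<and> (even i \<longrightarrow> i - 1 \<in> ?A))
      \<longleftrightarrow> (\<forall>i\<in>C. (odd (Suc (Suc i)) \<longrightarrow> Suc (Suc i) + 1 \<in> ?A) \<and> (even (Suc (Suc i)) \<longrightarrow> Suc (Suc i) - 1 \<in> ?A))"
    by (simp only: ball_simps)
  also have "\<dots> \<longleftrightarrow> odd_even C"
    unfolding odd_even_def using step by (rule ball_cong[OF refl])
  finally have high: "(\<forall>i\<in>shift2 C. (odd i \<longrightarrow> i + 1 \<in> ?A) \<and> (even i \<longrightarrow> i - 1 \<in> ?A)) \<longleftrightarrow> odd_even C" .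
  show ?thesis
    unfolding odd_even_def[of ?A] ball_Un low high ..
qed

definition f_index :: "nat list \<Rightarrow> nat list" where
  "f_index d = concat (map (\<lambda>r. block (d ! (2*r)) (d ! (2*r + 1))) [0..<length d div 2])"

lemma fN_eq_zeta_op: "fN N d = zeta_op N (f_index d) (\<lambda>_. 1) 1"
  unfolding fN_def f_index_def block_def zeta_diamond_eq_zeta_op ..

lemma f_index_Cons2: "f_index (a # b # c) = block a b @ f_index c"
proof -
  have "length (a # b # c) div 2 = Suc (length c div 2)"
    by simp
  then show ?thesis
    unfolding f_index_def
    by (simp only: upt_conv_Cons[of 0] map_Suc_upt[symmetric] list.map concat.simps zero_less_Suc) (simp add: comp_def)
qed

definition lhs_sets :: "nat list \<Rightarrow> nat set set" where
  "lhs_sets c = {A. A \<subseteq> {i\<in>{1..length c}. 1 < c ! (i - 1)} \<and> (\<forall>r\<in>{1..length c div 2}. \<not> {2*r - 1, 2*r} \<subseteq> A)}"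

definition lhs_op :: "nat \<Rightarrow> nat list \<Rightarrow> (nat \<Rightarrow> real) \<Rightarrow> nat \<Rightarrow> real" where
  "lhs_op N c \<phi> s = (\<Sum>A\<in>lhs_sets c. (-1) ^ card A / real N ^ card A * zeta_op N (f_index (minus_delta c A)) \<phi> s)"

definition rhs_sets :: "nat list \<Rightarrow> nat set set" where
  "rhs_sets c = {A. A \<subseteq> {i\<in>{1..length c}. c ! (i - 1) = 1} \<and> odd_even A}"

definition rhs_op :: "nat \<Rightarrow> nat list \<Rightarrow> (nat \<Rightarrow> real) \<Rightarrow> nat \<Rightarrow> real" where
  "rhs_op N c \<phi> y = (\<Sum>A\<in>rhs_sets c. (-1) ^ (card A div 2) / real N ^ card A * h_op N (delete_pos c A) True \<phi> y)"

lemma sum_subsets_Cons2: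
  "(\<Sum>A\<in>{A. A \<subseteq> {i\<in>{1..length (a # b # c)}. P ((a # b # c) ! (i - 1))} \<and> Q A}. F A)
    = (\<Sum>X\<in>{X. X \<subseteq> {i\<in>{1..2}. P ((a # b # c) ! (i - 1))}}.
         \<Sum>C\<in>{C. C \<subseteq> {i\<in>{1..length c}. P (c ! (i - 1))} \<and> Q (X \<union> shift2 C)}. F (X \<union> shift2 C))"
proof -
  have "(+) 2 = (\<lambda>i::nat. Suc (Suc i))"
    by (simp add: fun_eq_iff)
  moreover have "{i\<in>{1..length c}. P ((a # b # c) ! (2 + i - 1))} = {i\<in>{1..length c}. P (c ! (i - 1))}"
    by (auto simp: nth_Cons')
  ultimately show ?thesis
    using sum_subsets_split[where k = 2 and n = "length c" and P = "\<lambda>i. P ((a # b # c) ! (i - 1))"] by simp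
qed

lemma sum_lhs_sets_shift2:
  assumes X: "X \<subseteq> {1, 2}"
  shows "(\<Sum>C\<in>{C. C \<subseteq> {i\<in>{1..length c}. 1 < c ! (i - 1)}
            \<and> (\<forall>r\<in>{1..length (a # b # c) div 2}. \<not> {2*r - 1, 2*r} \<subseteq> X \<union> shift2 C)}.
        (-1) ^ card (X \<union> shift2 C) / real N ^ card (X \<union> shift2 C)
          * zeta_op N (f_index (minus_delta (a # b # c) (X \<union> shift2 C))) \<phi> s)
    = (if {1, 2} \<subseteq> X then 0 else (-1) ^ card X / real N ^ card X
         * zeta_op N (block (a - (if 1 \<in> X then 1 else 0)) (b - (if 2 \<in> X then 1 else 0))) (lhs_op N c \<phi>) s)"
proof -
  let ?B = "block (a - (if 1 \<in> X then 1 else 0)) (b - (if 2 \<in> X then 1 else 0))"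
  have C: "finite C" "0 \<notin> C" if "C \<subseteq> {i\<in>{1..length c}. 1 < c ! (i - 1)}" for C
    using that by (auto intro: finite_subset)
  have sets: "{C. C \<subseteq> {i\<in>{1..length c}. 1 < c ! (i - 1)}
            \<and> (\<forall>r\<in>{1..length (a # b # c) div 2}. \<not> {2*r - 1, 2*r} \<subseteq> X \<union> shift2 C)}
      = (if {1, 2} \<subseteq> X then {} else lhs_sets c)"
  proof (intro set_eqI)
    fix C
    show "C \<in> {C. C \<subseteq> {i\<in>{1..length c}. 1 < c ! (i - 1)}
            \<and> (\<forall>r\<in>{1..length (a # b # c) div 2}. \<not> {2*r - 1, 2*r} \<subseteq> X \<union> shift2 C)}
        \<longleftrightarrow> C \<in> (if {1, 2} \<subseteq> X then {} else lhs_sets c)"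
    proof (cases "C \<subseteq> {i\<in>{1..length c}. 1 < c ! (i - 1)}")
      case True
      have "length (a # b # c) div 2 = Suc (length c div 2)"
        by simp
      then show ?thesis
        unfolding lhs_sets_def mem_Collect_eq using True
        by (simp only: pairs_shift2[OF X C(2)[OF True]]) auto
    qed (auto simp: lhs_sets_def)
  qed
  have summand: "(-1) ^ card (X \<union> shift2 C) / real N ^ card (X \<union> shift2 C)
          * zeta_op N (f_index (minus_delta (a # b # c) (X \<union> shift2 C))) \<phi> s
      = (-1) ^ card X / real N ^ card X * ((-1) ^ card C / real N ^ card C * zeta_op N ?B (zeta_op N (f_index (minus_delta c C)) \<phi>) s)"
    if "C \<in> lhs_sets c" for C
    using that unfolding lhs_sets_def
    by (simp add: C minus_delta_shift2[OF X] card_shift2[OF X] f_index_Cons2 zeta_op_append power_add)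
  show ?thesis
  proof (cases "{1, 2} \<subseteq> X")
    case False
    then have "(\<Sum>C\<in>(if {1, 2} \<subseteq> X then {} else lhs_sets c). (-1) ^ card (X \<union> shift2 C) / real N ^ card (X \<union> shift2 C)
          * zeta_op N (f_index (minus_delta (a # b # c) (X \<union> shift2 C))) \<phi> s)
        = (\<Sum>C\<in>lhs_sets c. (-1) ^ card X / real N ^ card X
          * ((-1) ^ card C / real N ^ card C * zeta_op N ?B (zeta_op N (f_index (minus_delta c C)) \<phi>) s))"
      by (simp only: if_False) (rule sum.cong[OF refl summand])
    also have "\<dots> = (-1) ^ card X / real N ^ card X * zeta_op N ?B (lhs_op N c \<phi>) s"
      unfolding lhs_op_def zeta_op_sum sum_distrib_left ..
    finally show ?thesis
      unfolding sets by (simp only: False if_False)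
  qed (simp only: sets if_True sum.empty)
qed

lemma lhs_op_Cons2:
  "lhs_op N (a # b # c) \<phi> s = zeta_op N (block a b) (lhs_op N c \<phi>) s
     - (if 1 < b then zeta_op N (block a (b - 1)) (lhs_op N c \<phi>) s / real N else 0)
     - (if 1 < a then zeta_op N (block (a - 1) b) (lhs_op N c \<phi>) s / real N else 0)"
proof -
  let ?G = "\<lambda>X :: nat set. if {1, 2} \<subseteq> X then 0 else (-1) ^ card X / real N ^ card X
    * zeta_op N (block (a - (if 1 \<in> X then 1 else 0)) (b - (if 2 \<in> X then 1 else 0))) (lhs_op N c \<phi>) s"
  have "lhs_op N (a # b # c) \<phi> s = (\<Sum>X\<in>{X. X \<subseteq> {i\<in>{1..2}. 1 < (a # b # c) ! (i - 1)}}. ?G X)"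
    unfolding lhs_op_def[of N "a # b # c"] lhs_sets_def[of "a # b # c"] sum_subsets_Cons2[where P = "\<lambda>v. 1 < v"]
    by (rule sum.cong[OF refl], rule sum_lhs_sets_shift2) auto
  also have "\<dots> = ?G {} + (if 1 < a then ?G {1} else 0) + (if 1 < b then ?G {2} else 0)"
    unfolding sum_subsets_pair by simp
  finally show ?thesis
    by (simp add: field_simps)
qed

lemma sum_rhs_sets_shift2:
  assumes X: "X \<subseteq> {1, 2}"
  shows "(\<Sum>C\<in>{C. C \<subseteq> {i\<in>{1..length c}. c ! (i - 1) = 1} \<and> odd_even (X \<union> shift2 C)}.
        (-1) ^ (card (X \<union> shift2 C) div 2) / real N ^ card (X \<union> shift2 C)
          * h_op N (delete_pos (a # b # c) (X \<union> shift2 C)) True \<phi> y)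
    = (if 1 \<in> X \<longleftrightarrow> 2 \<in> X then (-1) ^ (card X div 2) / real N ^ card X
         * h_op N ((if 1 \<in> X then [] else [a]) @ (if 2 \<in> X then [] else [b])) True (rhs_op N c \<phi>) y else 0)"
proof -
  let ?xs = "(if 1 \<in> X then [] else [a]) @ (if 2 \<in> X then [] else [b])"
  have C: "finite C" "0 \<notin> C" if "C \<subseteq> {i\<in>{1..length c}. c ! (i - 1) = 1}" for C
    using that by (auto intro: finite_subset)
  have sets: "{C. C \<subseteq> {i\<in>{1..length c}. c ! (i - 1) = 1} \<and> odd_even (X \<union> shift2 C)}
      = (if 1 \<in> X \<longleftrightarrow> 2 \<in> X then rhs_sets c else {})"
    unfolding rhs_sets_def using odd_even_shift2[OF X C(2)] by auto
  show ?thesis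
  proof (cases "1 \<in> X \<longleftrightarrow> 2 \<in> X")
    case True
    with X have "X = {} \<or> X = {1, 2}"
      by auto
    then have even_X: "even (card X)" "even (length ?xs)"
      by auto
    have summand: "(-1) ^ (card (X \<union> shift2 C) div 2) / real N ^ card (X \<union> shift2 C)
          * h_op N (delete_pos (a # b # c) (X \<union> shift2 C)) True \<phi> y
        = (-1) ^ (card X div 2) / real N ^ card X
          * ((-1) ^ (card C div 2) / real N ^ card C * h_op N ?xs True (h_op N (delete_pos c C) True \<phi>) y)"
      if "C \<in> rhs_sets c" for C
    proof -
      have "card (X \<union> shift2 C) div 2 = card X div 2 + card C div 2"
        using that even_X(1) unfolding rhs_sets_def by (auto simp: C card_shift2[OF X])
      moreover have "h_op N (delete_pos (a # b # c) (X \<union> shift2 C)) True \<phi> = h_op N ?xs True (h_op N (delete_pos c C) True \<phi>)"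
        using that even_X(2) unfolding rhs_sets_def by (simp add: C delete_pos_shift2[OF X] h_op_append)
      ultimately show ?thesis
        using that unfolding rhs_sets_def by (simp add: C card_shift2[OF X] power_add)
    qed
    have "(\<Sum>C\<in>rhs_sets c. (-1) ^ (card (X \<union> shift2 C) div 2) / real N ^ card (X \<union> shift2 C)
          * h_op N (delete_pos (a # b # c) (X \<union> shift2 C)) True \<phi> y)
        = (\<Sum>C\<in>rhs_sets c. (-1) ^ (card X div 2) / real N ^ card X
          * ((-1) ^ (card C div 2) / real N ^ card C * h_op N ?xs True (h_op N (delete_pos c C) True \<phi>) y))"
      by (rule sum.cong[OF refl summand])
    also have "\<dots> = (-1) ^ (card X div 2) / real N ^ card X * h_op N ?xs True (rhs_op N c \<phi>) y"
      unfolding rhs_op_def h_op_sum sum_distrib_left ..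
    finally show ?thesis
      unfolding sets if_P[OF True] .
  qed (simp only: sets if_False sum.empty)
qed

lemma rhs_op_Cons2:
  "rhs_op N (a # b # c) \<phi> y = h_op N [a, b] True (rhs_op N c \<phi>) y - (if a = 1 \<and> b = 1 then rhs_op N c \<phi> y / real N ^ 2 else 0)"
proof -
  let ?G = "\<lambda>X :: nat set. if 1 \<in> X \<longleftrightarrow> 2 \<in> X then (-1) ^ (card X div 2) / real N ^ card X
         * h_op N ((if 1 \<in> X then [] else [a]) @ (if 2 \<in> X then [] else [b])) True (rhs_op N c \<phi>) y else 0"
  have "rhs_op N (a # b # c) \<phi> y = (\<Sum>X\<in>{X. X \<subseteq> {i\<in>{1..2}. (a # b # c) ! (i - 1) = 1}}. ?G X)"
    unfolding rhs_op_def[of N "a # b # c"] rhs_sets_def[of "a # b # c"] sum_subsets_Cons2[where P = "\<lambda>v. v = 1"]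
    by (rule sum.cong[OF refl], rule sum_rhs_sets_shift2) auto
  also have "\<dots> = ?G {} + (if a = 1 \<and> b = 1 then ?G {1, 2} else 0)"
    unfolding sum_subsets_pair by simp
  also have "?G {} = h_op N [a, b] True (rhs_op N c \<phi>) y"
    by (simp del: h_op.simps)
  also have "?G {1, 2} = - (rhs_op N c \<phi> y / real N ^ 2)"
    by (simp add: h_op_Nil power2_eq_square)
  finally show ?thesis
    by simp
qed

lemma lhs_op_Nil: "lhs_op N [] \<phi> = \<phi>"
proof -
  have "lhs_sets [] = {{}}"
    unfolding lhs_sets_def by auto
  then show ?thesis
    unfolding lhs_op_def by (simp add: fun_eq_iff f_index_def minus_delta_def)
qed

lemma rhs_op_Nil: "rhs_op N [] \<phi> = \<phi>"
proof -
  have "rhs_sets [] = {{}}"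
    unfolding rhs_sets_def odd_even_def by auto
  then show ?thesis
    unfolding rhs_op_def by (simp add: fun_eq_iff delete_pos_def)
qed

lemma zeta_op_pair_transform:
  assumes "a \<ge> 1" "b \<ge> 1" "N \<ge> 1"
  shows "zeta_op N (block a b) (transform N g) s - (if 1 < b then zeta_op N (block a (b - 1)) (transform N g) s / real N else 0)
       - (if 1 < a then zeta_op N (block (a - 1) b) (transform N g) s / real N else 0)
     = transform N (\<lambda>y. h_op N [a, b] True g y - (if a = 1 \<and> b = 1 then g y / real N ^ 2 else 0)) s"
proof -
  define cb where "cb = (if 1 < b then 1 / real N else 0)"
  define ca where "ca = (if 1 < a then 1 / real N else 0)"
  have "h_op N [a, b] True g y - (if a = 1 \<and> b = 1 then g y / real N ^ 2 else 0)
      = pair_op N a b g y - cb * pair_op N a (b - 1) g y - ca * pair_op N (a - 1) b g y" for y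
    using pair_identity[OF assms, of g y] by (cases "1 < b"; cases "1 < a") (simp_all add: ca_def cb_def del: h_op.simps)
  moreover have "(if 1 < b then zeta_op N (block a (b - 1)) (transform N g) s / real N else 0) = cb * transform N (pair_op N a (b - 1) g) s"
    using zeta_op_block_transform[of a "b - 1" N g s] assms by (simp add: cb_def)
  moreover have "(if 1 < a then zeta_op N (block (a - 1) b) (transform N g) s / real N else 0) = ca * transform N (pair_op N (a - 1) b g) s"
    using zeta_op_block_transform[of "a - 1" b N g s] assms by (simp add: ca_def)
  ultimately show ?thesis
    by (simp only: transform_lin zeta_op_block_transform[OF assms(1,2)])
qed

lemma lhs_op_transform:
  assumes "N \<ge> 1" "length c = 2 * n" "\<forall>x\<in>set c. x \<ge> 1"
  shows "lhs_op N c (transform N g) s = transform N (rhs_op N c g) s"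
  using assms(2,3)
proof (induction n arbitrary: c s)
  case 0
  then show ?case by (simp add: lhs_op_Nil rhs_op_Nil)
next
  case (Suc n)
  then obtain a b c' where c: "c = a # b # c'" and len: "length c' = 2 * n"
    by (cases c; cases "tl c") auto
  have ab: "a \<ge> 1" "b \<ge> 1" "\<forall>x\<in>set c'. x \<ge> 1"
    using Suc.prems c by auto
  have IH: "lhs_op N c' (transform N g) = transform N (rhs_op N c' g)"
    using Suc.IH[OF len ab(3)] by (simp add: fun_eq_iff)
  have "(\<lambda>y. h_op N [a, b] True (rhs_op N c' g) y - (if a = 1 \<and> b = 1 then rhs_op N c' g y / real N ^ 2 else 0)) = rhs_op N c g"
    unfolding c by (rule ext) (simp only: rhs_op_Cons2)
  then show ?case
    unfolding c lhs_op_Cons2 IH zeta_op_pair_transform[OF ab(1,2) assms(1)] by simp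
qed

lemma transform_const_one: "transform N (\<lambda>_. 1) = (\<lambda>_. 1)"
proof
  fix s
  show "transform N (\<lambda>_. 1) s = 1"
  proof (cases "2 \<le> s \<and> s \<le> N")
    case True
    then have "(\<Sum>y\<in>{s - 1..<N}. transform_coeff N s y) = real ((N - 1) choose (s - 1)) / real ((N - 1) choose (s - 1))"
      using sum_transform_coeff[of s N N] by simp
    also have "\<dots> = 1"
    proof -
      have "\<not> N - 1 < s - 1"
        using True by linarith
      then show ?thesis by simp
    qed
    finally show ?thesis
      using True by (simp add: transform_def)
  qed (auto simp: transform_def)
qed

lemma set_delete_pos: "set (delete_pos c A) \<subseteq> set c"
  unfolding delete_pos_def by auto

theorem mainTheorem17:
  fixes N s :: nat and c :: "nat list"
  assumes "N \<ge> 1" and "s \<ge> 1" and "length c = 2*s" and "\<forall>x\<in>set c. x \<ge> 1"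
  shows "(\<Sum>A\<in>{A. A \<subseteq> {i\<in>{1..2*s}. c ! (i-1) > 1} \<and> (\<forall>r\<in>{1..s}. \<not> {2*r-1, 2*r} \<subseteq> A)}.
            (-1) ^ card A / real N ^ card A * fN N (minus_delta c A))
       = (\<Sum>A\<in>{A. A \<subseteq> {i\<in>{1..2*s}. c ! (i-1) = 1} \<and> odd_even A}.
            (-1) ^ (card A div 2) / real N ^ card A * hN N (delete_pos c A))"
proof -
  have "(\<Sum>A\<in>{A. A \<subseteq> {i\<in>{1..2*s}. c ! (i-1) > 1} \<and> (\<forall>r\<in>{1..s}. \<not> {2*r-1, 2*r} \<subseteq> A)}.
            (-1) ^ card A / real N ^ card A * fN N (minus_delta c A)) = lhs_op N c (\<lambda>_. 1) 1"
    using assms(3) by (simp add: lhs_op_def lhs_sets_def fN_eq_zeta_op)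
  also have "\<dots> = lhs_op N c (transform N (\<lambda>_. 1)) 1"
    by (simp only: transform_const_one)
  also have "\<dots> = transform N (rhs_op N c (\<lambda>_. 1)) 1"
    by (rule lhs_op_transform[OF assms(1,3,4)])
  also have "\<dots> = rhs_op N c (\<lambda>_. 1) 0"
    by (simp add: transform_def)
  also have "\<dots> = (\<Sum>A\<in>{A. A \<subseteq> {i\<in>{1..2*s}. c ! (i-1) = 1} \<and> odd_even A}.
            (-1) ^ (card A div 2) / real N ^ card A * hN N (delete_pos c A))"
  proof -
    have "hN N (delete_pos c A) = h_op N (delete_pos c A) True (\<lambda>_. 1) 0" for A
      using set_delete_pos[of c A] assms(1,4) by (intro hN_eq_h_op) auto
    then show ?thesis
      using assms(3) by (simp add: rhs_op_def rhs_sets_def)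
  qed
  finally show ?thesis .
qed

end
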